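(* Consider a single-hop switched network with $N$ queues and arrival rate vector $\lambda\in\Lambda$. (i) Every fluid model solution for the MW-$\alpha$ policy ($\alpha>0$) satisfies $\mathbf 1\cdot q(t)\le N^{\alpha/(1+\alpha)}\,\mathbf 1\cdot q(0)$ for all $t\ge0$. (ii) If $\lambda$ satisfies the complete loading condition, then every fluid model solution for any scheduling policy satisfies $\mathbf 1\cdot q(t)\ge\mathbf 1\cdot q(0)$ for all $t\ge0$.
   Context: Single-hop network: finite $\mathcal S\subset\mathbb R_+^N$. $\langle\mathcal S\rangle$ convex hull; $\Lambda=\{\lambda\in\mathbb R_+^N:\lambda\le\sigma$ for some $\sigma\in\langle\mathcal S\rangle\}$. $E$ = extreme points of $\{\xi\in\mathbb R_+^N:\max_\pi\xi\cdot\pi\le1\}$, $\mathcal S^*$ its maximal elements, $\Xi(\lambda)=\{\xi\in\mathcal S^*:\xi\cdot\lambda=1\}$. Complete loading condition: $\lambda\in\Lambda$ and $\mathbf 1/\max_{\pi\in\mathcal S}\mathbf 1\cdot\pi$ lies in the convex hull of $\Xi(\lambda)$. Fluid model solution for any scheduling policy with rate $\lambda$: absolutely continuous $q,y:[0,T]\to\mathbb R_+^N$, $s_\pi\ge0$ with $q(t)=q(0)+\lambda t-\sum_\pi s_\pi(t)\pi+y(t)$, $\sum_\pi s_\pi(t)=t$, $y(t)\le\sum_\pi s_\pi(t)\pi$, $s_\pi,y_n$ nondecreasing, and a.e. $\dot y_n(t)=0$ if $q_n(t)>0$. A fluid model solution for MW-$\alpha$ additionally satisfies a.e. $\dot s_\pi(t)=0$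 whenever $\pi\cdot q(t)^\alpha<\max_{\rho\in\mathcal S}\rho\cdot q(t)^\alpha$ (power taken componentwise). *)

theory Defs
  imports "HOL-Analysis.Analysis"
begin

text \<open>Vectors in R^N are modelled as real^'n with a finite index type 'n (N = CARD('n)).
  The order on real^'n is componentwise.\<close>

definition abs_cont_on :: "real set \<Rightarrow> (real \<Rightarrow> 'a::real_normed_vector) \<Rightarrow> bool" where
  "abs_cont_on I f \<longleftrightarrow>
     (\<forall>\<epsilon>>0. \<exists>\<delta>>0. \<forall>(n::nat) (a::nat \<Rightarrow> real) (b::nat \<Rightarrow> real).
        (\<forall>k<n. a k \<in> I \<and> b k \<in> I \<and> a k \<le> b k) \<and>
        (\<forall>j<n. \<forall>k<n. j \<noteq> k \<longrightarrow> b j \<le> a k \<or> b k \<le> a j) \<and>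
        (\<Sum>k<n. b k - a k) < \<delta>
        \<longrightarrow> (\<Sum>k<n. norm (f (b k) - f (a k))) < \<epsilon>)"

definition cap_region :: "(real^'n) set \<Rightarrow> (real^'n) set" where
  "cap_region S = {r. 0 \<le> r \<and> (\<exists>\<sigma>\<in>convex hull S. r \<le> \<sigma>)}"

definition dual_region :: "(real^'n) set \<Rightarrow> (real^'n) set" where
  "dual_region S = {\<xi>. 0 \<le> \<xi> \<and> Max ((\<lambda>\<pi>. \<xi> \<bullet> \<pi>) ` S) \<le> 1}"

definition Ext :: "(real^'n) set \<Rightarrow> (real^'n) set" where
  "Ext S = {\<xi>. \<xi> extreme_point_of dual_region S}"

definition S_star :: "(real^'n) set \<Rightarrow> (real^'n) set" where
  "S_star S = {\<xi> \<in> Ext S. \<not> (\<exists>\<xi>'\<in>Ext S. \<xi> \<le> \<xi>' \<and> \<xi>' \<noteq> \<xi>)}"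

definition Xi :: "(real^'n) set \<Rightarrow> real^'n \<Rightarrow> (real^'n) set" where
  "Xi S lam = {\<xi> \<in> S_star S. \<xi> \<bullet> lam = 1}"

definition complete_loading :: "(real^'n) set \<Rightarrow> real^'n \<Rightarrow> bool" where
  "complete_loading S lam \<longleftrightarrow>
     lam \<in> cap_region S \<and>
     (1 / Max ((\<lambda>\<pi>. 1 \<bullet> \<pi>) ` S)) *\<^sub>R (1::real^'n) \<in> convex hull (Xi S lam)"

text \<open>Fluid model solution on [0,T] for an arbitrary scheduling policy.
  s \<pi> is the cumulative time spent in schedule \<pi>.\<close>
definition fluid_solution ::
  "(real^'n) set \<Rightarrow> real^'n \<Rightarrow> real \<Rightarrow> (real \<Rightarrow> real^'n) \<Rightarrow> (real \<Rightarrow> real^'n)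
     \<Rightarrow> (real^'n \<Rightarrow> real \<Rightarrow> real) \<Rightarrow> bool" where
  "fluid_solution S lam T q y s \<longleftrightarrow>
     abs_cont_on {0..T} q \<and> abs_cont_on {0..T} y \<and>
     (\<forall>t\<in>{0..T}. 0 \<le> q t \<and> 0 \<le> y t) \<and>
     (\<forall>\<pi>\<in>S. \<forall>t\<in>{0..T}. 0 \<le> s \<pi> t) \<and>
     (\<forall>t\<in>{0..T}. q t = q 0 + t *\<^sub>R lam - (\<Sum>\<pi>\<in>S. s \<pi> t *\<^sub>R \<pi>) + y t) \<and>
     (\<forall>t\<in>{0..T}. (\<Sum>\<pi>\<in>S. s \<pi> t) = t) \<and>
     (\<forall>t\<in>{0..T}. y t \<le> (\<Sum>\<pi>\<in>S. s \<pi> t *\<^sub>R \<pi>)) \<and>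
     (\<forall>\<pi>\<in>S. mono_on {0..T} (s \<pi>)) \<and>
     (\<forall>i. mono_on {0..T} (\<lambda>t. y t $ i)) \<and>
     (AE t in lebesgue_on {0..T}. \<forall>i. 0 < q t $ i \<longrightarrow>
         ((\<lambda>u. y u $ i) has_real_derivative 0) (at t within {0..T}))"

definition vpowr :: "real^'n \<Rightarrow> real \<Rightarrow> real^'n" where
  "vpowr x a = (\<chi> i. x $ i powr a)"

definition MW_fluid_solution ::
  "real \<Rightarrow> (real^'n) set \<Rightarrow> real^'n \<Rightarrow> real \<Rightarrow> (real \<Rightarrow> real^'n) \<Rightarrow> (real \<Rightarrow> real^'n)
     \<Rightarrow> (real^'n \<Rightarrow> real \<Rightarrow> real) \<Rightarrow> bool" where
  "MW_fluid_solution \<alpha> S lam T q y s \<longleftrightarrow>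
     fluid_solution S lam T q y s \<and>
     (AE t in lebesgue_on {0..T}. \<forall>\<pi>\<in>S.
        \<pi> \<bullet> vpowr (q t) \<alpha> < Max ((\<lambda>\<rho>. \<rho> \<bullet> vpowr (q t) \<alpha>) ` S) \<longrightarrow>
        (s \<pi> has_real_derivative 0) (at t within {0..T}))"

end

theory Submission
  imports Defs
begin

text \<open>
  Along a fluid model solution for MW-\<alpha> the Lyapunov function
  L(t) = \<Sum>i q_i(t) powr (1 + \<alpha>) does not increase; Jensen's inequality for the mean of
  q(t) and superadditivity of z powr (1 + \<alpha>) for q(0) then give
  1 \<bullet> q(t) \<le> N powr (\<alpha> / (1 + \<alpha>)) * 1 \<bullet> q(0).  As the schedule allocations s need not be
  differentiable, L is not differentiated: instead its increments over short intervals
  straddling almost every time are shown to be o(v - u) from above (straddle smallness), and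
  a gauge-integral argument shows that an absolutely continuous function with this property
  almost everywhere is nonincreasing.  L is absolutely continuous since q is Lipschitz,
  which rests on the fact that a queue idles no faster than it could be served.

  For every \<xi> in Xi S lam the weighted content \<xi> \<bullet> q is nondecreasing, as
  \<xi> \<bullet> \<pi> \<le> 1 = \<xi> \<bullet> lam for all schedules; complete loading makes the normalised all-ones
  vector a convex combination of such \<xi>.
\<close>

definition nonoverlapping_intervals :: "real set \<Rightarrow> nat \<Rightarrow> (nat \<Rightarrow> real) \<Rightarrow> (nat \<Rightarrow> real) \<Rightarrow> bool" where
  "nonoverlapping_intervals I n a b \<longleftrightarrow>
     (\<forall>k<n. a k \<in> I \<and> b k \<in> I \<and> a k \<le> b k) \<and>
     (\<forall>j<n. \<forall>k<n. j \<noteq> k \<longrightarrow> b j \<le> a k \<or> b k \<le> a j)"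

lemma abs_cont_onI:
  assumes "\<And>\<epsilon>. \<epsilon> > 0 \<Longrightarrow> \<exists>\<delta>>0. \<forall>n a b. nonoverlapping_intervals I n a b \<longrightarrow>
      (\<Sum>k<n. b k - a k) < \<delta> \<longrightarrow> (\<Sum>k<n. norm (f (b k) - f (a k))) < \<epsilon>"
  shows "abs_cont_on I f"
  using assms unfolding abs_cont_on_def nonoverlapping_intervals_def imp_conjL by simp

lemma abs_cont_onE:
  assumes "abs_cont_on I f" "\<epsilon> > 0"
  obtains \<delta> where "\<delta> > 0" "\<And>n a b. nonoverlapping_intervals I n a b \<Longrightarrow>
      (\<Sum>k<n. b k - a k) < \<delta> \<Longrightarrow> (\<Sum>k<n. norm (f (b k) - f (a k))) < \<epsilon>"
proof -
  obtain \<delta> where "\<delta> > 0" and \<delta>: "\<forall>(n::nat) (a::nat \<Rightarrow> real) (b::nat \<Rightarrow> real).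
        (\<forall>k<n. a k \<in> I \<and> b k \<in> I \<and> a k \<le> b k) \<and>
        (\<forall>j<n. \<forall>k<n. j \<noteq> k \<longrightarrow> b j \<le> a k \<or> b k \<le> a j) \<and>
        (\<Sum>k<n. b k - a k) < \<delta>
        \<longrightarrow> (\<Sum>k<n. norm (f (b k) - f (a k))) < \<epsilon>"
    using assms unfolding abs_cont_on_def by blast
  show ?thesis
  proof (rule that[OF \<open>\<delta> > 0\<close>])
    fix n a b assume "nonoverlapping_intervals I n a b" "(\<Sum>k<n. b k - a k) < \<delta>"
    then show "(\<Sum>k<n. norm (f (b k) - f (a k))) < \<epsilon>"
      using \<delta> unfolding nonoverlapping_intervals_def by blast
  qed
qed

lemma abs_cont_on_subset:
  assumes "abs_cont_on I f" "J \<subseteq> I"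
  shows "abs_cont_on J f"
proof (rule abs_cont_onI)
  fix \<epsilon> :: real assume "\<epsilon> > 0"
  obtain \<delta> where "\<delta> > 0" and \<delta>: "\<And>n a b. nonoverlapping_intervals I n a b \<Longrightarrow>
      (\<Sum>k<n. b k - a k) < \<delta> \<Longrightarrow> (\<Sum>k<n. norm (f (b k) - f (a k))) < \<epsilon>"
    by (rule abs_cont_onE[OF assms(1) \<open>\<epsilon> > 0\<close>]) (rule that)
  have "nonoverlapping_intervals I n a b" if "nonoverlapping_intervals J n a b" for n a b
    using that assms(2) unfolding nonoverlapping_intervals_def by blast
  with \<delta> \<open>\<delta> > 0\<close> show "\<exists>\<delta>>0. \<forall>n a b. nonoverlapping_intervals J n a b \<longrightarrow>
      (\<Sum>k<n. b k - a k) < \<delta> \<longrightarrow> (\<Sum>k<n. norm (f (b k) - f (a k))) < \<epsilon>"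
    by blast
qed

lemma abs_cont_on_component:
  fixes f :: "real \<Rightarrow> real^'n"
  assumes "abs_cont_on I f"
  shows "abs_cont_on I (\<lambda>t. f t $ i)"
proof (rule abs_cont_onI)
  fix \<epsilon> :: real assume "\<epsilon> > 0"
  obtain \<delta> where "\<delta> > 0" and \<delta>: "\<And>n a b. nonoverlapping_intervals I n a b \<Longrightarrow>
      (\<Sum>k<n. b k - a k) < \<delta> \<Longrightarrow> (\<Sum>k<n. norm (f (b k) - f (a k))) < \<epsilon>"
    by (rule abs_cont_onE[OF assms(1) \<open>\<epsilon> > 0\<close>]) (rule that)
  show "\<exists>\<delta>>0. \<forall>n a b. nonoverlapping_intervals I n a b \<longrightarrow>
      (\<Sum>k<n. b k - a k) < \<delta> \<longrightarrow> (\<Sum>k<n. norm (f (b k) $ i - f (a k) $ i)) < \<epsilon>"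
  proof (intro exI[of _ \<delta>] conjI allI impI)
    fix n a b assume "nonoverlapping_intervals I n a b" "(\<Sum>k<n. b k - a k) < \<delta>"
    have "(\<Sum>k<n. norm (f (b k) $ i - f (a k) $ i)) \<le> (\<Sum>k<n. norm (f (b k) - f (a k)))"
      by (intro sum_mono) (metis component_le_norm_cart real_norm_def vector_minus_component)
    also have "\<dots> < \<epsilon>" by (rule \<delta>) fact+
    finally show "(\<Sum>k<n. norm (f (b k) $ i - f (a k) $ i)) < \<epsilon>" .
  qed (rule \<open>\<delta> > 0\<close>)
qed

lemma lipschitz_imp_abs_cont_on:
  fixes f :: "real \<Rightarrow> 'a::real_normed_vector"
  assumes lip: "\<And>u v. u \<in> I \<Longrightarrow> v \<in> I \<Longrightarrow> norm (f v - f u) \<le> L * \<bar>v - u\<bar>"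
  shows "abs_cont_on I f"
proof (rule abs_cont_onI)
  fix \<epsilon> :: real assume "\<epsilon> > 0"
  show "\<exists>\<delta>>0. \<forall>n a b. nonoverlapping_intervals I n a b \<longrightarrow>
      (\<Sum>k<n. b k - a k) < \<delta> \<longrightarrow> (\<Sum>k<n. norm (f (b k) - f (a k))) < \<epsilon>"
  proof (intro exI[of _ "\<epsilon> / (\<bar>L\<bar> + 1)"] conjI allI impI)
    fix n a b assume ov: "nonoverlapping_intervals I n a b"
      and len: "(\<Sum>k<n. b k - a k) < \<epsilon> / (\<bar>L\<bar> + 1)"
    have "(\<Sum>k<n. norm (f (b k) - f (a k))) \<le> (\<Sum>k<n. \<bar>L\<bar> * (b k - a k))"
    proof (intro sum_mono)
      fix k assume "k \<in> {..<n}"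
      then have "a k \<in> I" "b k \<in> I" "a k \<le> b k" using ov by (auto simp: nonoverlapping_intervals_def)
      then have "norm (f (b k) - f (a k)) \<le> L * \<bar>b k - a k\<bar>" using lip by blast
      also have "\<dots> \<le> \<bar>L\<bar> * (b k - a k)" using \<open>a k \<le> b k\<close> by (simp add: mult_right_mono)
      finally show "norm (f (b k) - f (a k)) \<le> \<bar>L\<bar> * (b k - a k)" .
    qed
    also have "\<dots> = \<bar>L\<bar> * (\<Sum>k<n. b k - a k)" by (simp add: sum_distrib_left)
    also have "\<dots> \<le> \<bar>L\<bar> * (\<epsilon> / (\<bar>L\<bar> + 1))" using len by (intro mult_left_mono) auto
    also have "\<dots> < \<epsilon>" using \<open>\<epsilon> > 0\<close> by (simp add: field_simps)
    finally show "(\<Sum>k<n. norm (f (b k) - f (a k))) < \<epsilon>" .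
  qed (use \<open>\<epsilon> > 0\<close> in simp)
qed

lemma abs_cont_on_imp_continuous_on:
  fixes f :: "real \<Rightarrow> 'a::real_normed_vector"
  assumes "abs_cont_on I f"
  shows "continuous_on I f"
  unfolding continuous_on_iff
proof (intro ballI allI impI)
  fix x e assume "x \<in> I" "(e::real) > 0"
  obtain \<delta> where "\<delta> > 0" and \<delta>: "\<And>n a b. nonoverlapping_intervals I n a b \<Longrightarrow>
      (\<Sum>k<n. b k - a k) < \<delta> \<Longrightarrow> (\<Sum>k<n. norm (f (b k) - f (a k))) < e"
    by (rule abs_cont_onE[OF assms \<open>e > 0\<close>]) (rule that)
  show "\<exists>d>0. \<forall>x'\<in>I. dist x' x < d \<longrightarrow> dist (f x') (f x) < e"
  proof (intro exI[of _ \<delta>] conjI ballI impI)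
    fix x' assume "x' \<in> I" "dist x' x < \<delta>"
    have "nonoverlapping_intervals I 1 (\<lambda>_. min x x') (\<lambda>_. max x x')"
      using \<open>x \<in> I\<close> \<open>x' \<in> I\<close> by (auto simp: nonoverlapping_intervals_def min_def max_def)
    moreover have "max x x' - min x x' < \<delta>"
      using \<open>dist x' x < \<delta>\<close> by (auto simp: dist_real_def)
    ultimately have "norm (f (max x x') - f (min x x')) < e" using \<delta> by fastforce
    then show "dist (f x') (f x) < e"
      by (cases "x \<le> x'") (simp_all add: dist_norm norm_minus_commute)
  qed (use \<open>\<delta> > 0\<close> in simp)
qed

text \<open>Absolute continuity for a finite set of non-overlapping intervals, given by their
  pairs of endpoints; this is the form in which it meets tagged divisions.\<close>
lemma abs_cont_on_finite_set:
  fixes f :: "real \<Rightarrow> 'a::real_normed_vector"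
  assumes "abs_cont_on I f" "\<epsilon> > 0"
  obtains \<delta> where "\<delta> > 0"
    "\<And>D. finite D \<Longrightarrow> (\<forall>p\<in>D. fst p \<in> I \<and> snd p \<in> I \<and> fst p \<le> snd p) \<Longrightarrow>
      (\<forall>p\<in>D. \<forall>p'\<in>D. p \<noteq> p' \<longrightarrow> snd p \<le> fst p' \<or> snd p' \<le> fst p) \<Longrightarrow>
      (\<Sum>p\<in>D. snd p - fst p) < \<delta> \<Longrightarrow> (\<Sum>p\<in>D. norm (f (snd p) - f (fst p))) < \<epsilon>"
proof -
  obtain \<delta> where "\<delta> > 0" and \<delta>: "\<And>n a b. nonoverlapping_intervals I n a b \<Longrightarrow>
      (\<Sum>k<n. b k - a k) < \<delta> \<Longrightarrow> (\<Sum>k<n. norm (f (b k) - f (a k))) < \<epsilon>"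
    by (rule abs_cont_onE[OF assms]) (rule that)
  show ?thesis
  proof (rule that[OF \<open>\<delta> > 0\<close>])
    fix D :: "(real \<times> real) set"
    assume fin: "finite D" and D1: "\<forall>p\<in>D. fst p \<in> I \<and> snd p \<in> I \<and> fst p \<le> snd p"
      and D2: "\<forall>p\<in>D. \<forall>p'\<in>D. p \<noteq> p' \<longrightarrow> snd p \<le> fst p' \<or> snd p' \<le> fst p"
      and D3: "(\<Sum>p\<in>D. snd p - fst p) < \<delta>"
    obtain n :: nat and h where "D = h ` {i. i < n}" "inj_on h {i. i < n}"
      using finite_imp_nat_seg_image_inj_on[OF fin] by metis
    then have Dh: "D = h ` {..<n}" and inj: "inj_on h {..<n}" by (simp_all add: lessThan_def)
    have "nonoverlapping_intervals I n (fst \<circ> h) (snd \<circ> h)"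
      unfolding nonoverlapping_intervals_def
    proof (rule conjI; intro allI impI)
      fix k assume "k < n"
      then show "(fst \<circ> h) k \<in> I \<and> (snd \<circ> h) k \<in> I \<and> (fst \<circ> h) k \<le> (snd \<circ> h) k"
        using D1 Dh by auto
    next
      fix j k assume "j < n" "k < n" "j \<noteq> k"
      then have "h j \<noteq> h k" "h j \<in> D" "h k \<in> D" using inj Dh by (auto simp: inj_on_def)
      then show "(snd \<circ> h) j \<le> (fst \<circ> h) k \<or> (snd \<circ> h) k \<le> (fst \<circ> h) j"
        using D2 by auto
    qed
    moreover have "(\<Sum>k<n. (snd \<circ> h) k - (fst \<circ> h) k) < \<delta>"
      using D3 inj unfolding Dh by (simp add: sum.reindex)
    ultimately have "(\<Sum>k<n. norm (f ((snd \<circ> h) k) - f ((fst \<circ> h) k))) < \<epsilon>"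
      by (rule \<delta>)
    then show "(\<Sum>p\<in>D. norm (f (snd p) - f (fst p))) < \<epsilon>"
      using inj unfolding Dh by (simp add: sum.reindex)
  qed
qed

text \<open>Lebesgue length of a real interval (the plain name content also denotes the
  content of a polynomial).\<close>
abbreviation len :: "real set \<Rightarrow> real" where
  "len \<equiv> Henstock_Kurzweil_Integration.content"

text \<open>For h u v = g v - g u this
  says that the upper derivative of g at t is at most 0 in a uniform (straddle) sense.\<close>
definition straddle_small :: "real set \<Rightarrow> real \<Rightarrow> (real \<Rightarrow> real \<Rightarrow> real) \<Rightarrow> bool" where
  "straddle_small I t h \<longleftrightarrow> (\<forall>\<epsilon>>0. \<exists>d>0. \<forall>u v. u \<in> I \<longrightarrow> v \<in> I \<longrightarrow> u \<le> t \<longrightarrow> t \<le> v \<longrightarrow>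
      v - u < d \<longrightarrow> h u v \<le> \<epsilon> * (v - u))"

lemma tagged_division_element:
  assumes "p tagged_division_of {a..b::real}" "(x, K) \<in> p"
  shows "K = {Inf K..Sup K}" "Inf K \<le> x" "x \<le> Sup K" "a \<le> Inf K" "Sup K \<le> b"
    "len K = Sup K - Inf K"
proof -
  obtain u v where K: "K = {u..v}" using tagged_division_ofD(4)[OF assms] by (metis cbox_interval)
  have "x \<in> K" using tagged_division_ofD(2)[OF assms] .
  then have uv: "u \<le> x" "x \<le> v" using K by simp_all
  then have iu: "Inf K = u" "Sup K = v" unfolding K by simp_all
  show "K = {Inf K..Sup K}" "Inf K \<le> x" "x \<le> Sup K" "len K = Sup K - Inf K"
    using K uv iu by simp_all
  have "u \<in> K" "v \<in> K" using K uv by simp_all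
  then have "a \<le> u" "v \<le> b" using tagged_division_ofD(3)[OF assms] by (meson atLeastAtMost_iff subsetD)+
  then show "a \<le> Inf K" "Sup K \<le> b" using iu by simp_all
qed

lemma tagged_division_separated:
  assumes p: "p tagged_division_of {a..b::real}" and in_p: "(x, K) \<in> p" "(x', K') \<in> p"
    and "(x, K) \<noteq> (x', K')" "len K > 0" "len K' > 0"
  shows "Sup K \<le> Inf K' \<or> Sup K' \<le> Inf K"
proof -
  note K = tagged_division_element[OF p in_p(1)] and K' = tagged_division_element[OF p in_p(2)]
  have "interior K \<inter> interior K' = {}"
    using tagged_division_ofD(5)[OF p in_p] assms(4) by auto
  then have "{Inf K<..<Sup K} \<inter> {Inf K'<..<Sup K'} = {}"
    using K(1) K'(1) by (metis interior_atLeastAtMost_real)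
  then show ?thesis using assms(5,6) K(6) K'(6) by (auto simp: disjoint_iff)
qed

lemma abs_cont_on_tagged_subfamily:
  fixes g :: "real \<Rightarrow> real"
  assumes "abs_cont_on {a..b} g" "\<epsilon> > 0"
  obtains \<delta> where "\<delta> > 0"
    "\<And>p P. p tagged_division_of {a..b} \<Longrightarrow> P \<subseteq> p \<Longrightarrow> (\<Sum>(x, K)\<in>P. len K) < \<delta> \<Longrightarrow>
       (\<Sum>(x, K)\<in>P. g (Sup K) - g (Inf K)) < \<epsilon>"
proof -
  obtain \<delta> where "\<delta> > 0" and \<delta>: "\<And>D. finite D \<Longrightarrow>
      (\<forall>q\<in>D. fst q \<in> {a..b} \<and> snd q \<in> {a..b} \<and> fst q \<le> snd q) \<Longrightarrow>
      (\<forall>q\<in>D. \<forall>q'\<in>D. q \<noteq> q' \<longrightarrow> snd q \<le> fst q' \<or> snd q' \<le> fst q) \<Longrightarrow>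
      (\<Sum>q\<in>D. snd q - fst q) < \<delta> \<Longrightarrow> (\<Sum>q\<in>D. norm (g (snd q) - g (fst q))) < \<epsilon>"
    by (rule abs_cont_on_finite_set[OF assms]) (rule that)
  show ?thesis
  proof (rule that[OF \<open>\<delta> > 0\<close>])
    fix p P assume p: "p tagged_division_of {a..b}" and "P \<subseteq> p"
      and short: "(\<Sum>(x, K)\<in>P. len K) < \<delta>"
    note elem = tagged_division_element[OF p]
    define P' where "P' = {(x, K) \<in> P. len K > 0}"
    define ends where "ends = (\<lambda>(x::real, K::real set). (Inf K, Sup K))"
    have "finite P" using tagged_division_ofD(1)[OF p] \<open>P \<subseteq> p\<close> finite_subset by blast
    have "P' \<subseteq> P" unfolding P'_def by auto
    then have "finite P'" using \<open>finite P\<close> by (rule finite_subset)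
    have P'_in_p: "xK \<in> p" if "xK \<in> P'" for xK using that \<open>P \<subseteq> p\<close> \<open>P' \<subseteq> P\<close> by blast
    have drop_degenerate: "(\<Sum>(x, K)\<in>P. g (Sup K) - g (Inf K)) = (\<Sum>(x, K)\<in>P'. g (Sup K) - g (Inf K))"
    proof (rule sum.mono_neutral_right[OF \<open>finite P\<close> \<open>P' \<subseteq> P\<close>], intro ballI)
      fix xK assume "xK \<in> P - P'"
      then obtain x K where xK: "xK = (x, K)" "(x, K) \<in> p" "\<not> len K > 0"
        using \<open>P \<subseteq> p\<close> unfolding P'_def by auto
      then have "Sup K = Inf K" using elem[OF xK(2)] by auto
      then show "(\<lambda>(x, K). g (Sup K) - g (Inf K)) xK = 0" using xK(1) by simp
    qed
    have separated: "Sup K \<le> Inf K' \<or> Sup K' \<le> Inf K"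
      if "(x, K) \<in> P'" "(x', K') \<in> P'" "(x, K) \<noteq> (x', K')" for x K x' K'
      using tagged_division_separated[OF p P'_in_p[OF that(1)] P'_in_p[OF that(2)] that(3)] that(1,2)
      unfolding P'_def by auto
    have "inj_on ends P'"
    proof (rule inj_onI, rule ccontr)
      fix xK xK' assume in_P': "xK \<in> P'" "xK' \<in> P'" and "ends xK = ends xK'" "xK \<noteq> xK'"
      moreover obtain x K x' K' where "xK = (x, K)" "xK' = (x', K')" by fastforce
      ultimately have "Sup K \<le> Inf K" using separated[of x K x' K'] by (auto simp: ends_def)
      moreover have "len K > 0" "(x, K) \<in> p"
        using in_P' \<open>xK = (x, K)\<close> P'_in_p unfolding P'_def by auto
      ultimately show False using elem(6) by fastforce
    qed
    then have reindex: "(\<Sum>(x, K)\<in>P'. f (Inf K) (Sup K)) = (\<Sum>q\<in>ends ` P'. f (fst q) (snd q))" for f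
      by (simp add: sum.reindex ends_def case_prod_unfold)
    have "(\<Sum>q\<in>ends ` P'. norm (g (snd q) - g (fst q))) < \<epsilon>"
    proof (rule \<delta>)
      show "finite (ends ` P')" using \<open>finite P'\<close> by simp
      show "\<forall>q\<in>ends ` P'. fst q \<in> {a..b} \<and> snd q \<in> {a..b} \<and> fst q \<le> snd q"
      proof
        fix q assume "q \<in> ends ` P'"
        then obtain x K where "(x, K) \<in> p" "q = (Inf K, Sup K)"
          using P'_in_p unfolding ends_def by auto
        then show "fst q \<in> {a..b} \<and> snd q \<in> {a..b} \<and> fst q \<le> snd q"
          using elem[of x K] by auto
      qed
      show "\<forall>q\<in>ends ` P'. \<forall>q'\<in>ends ` P'. q \<noteq> q' \<longrightarrow> snd q \<le> fst q' \<or> snd q' \<le> fst q"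
        using separated by (fastforce simp: ends_def)
      have "(\<Sum>q\<in>ends ` P'. snd q - fst q) = (\<Sum>(x, K)\<in>P'. len K)"
        using reindex[of "\<lambda>u v. v - u", symmetric] elem(6)[OF P'_in_p]
        by (auto intro!: sum.cong)
      also have "\<dots> \<le> (\<Sum>(x, K)\<in>P. len K)"
        using \<open>finite P\<close> \<open>P' \<subseteq> P\<close> by (intro sum_mono2) auto
      finally show "(\<Sum>q\<in>ends ` P'. snd q - fst q) < \<delta>" using short by simp
    qed
    then show "(\<Sum>(x, K)\<in>P. g (Sup K) - g (Inf K)) < \<epsilon>"
      unfolding drop_degenerate reindex[of "\<lambda>u v. g v - g u"]
      by (smt (verit) sum_mono real_norm_def abs_ge_self)
  qed
qed

lemma negligible_tags_gauge:
  assumes "negligible E" "\<delta> > 0"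
  obtains \<gamma> where "gauge \<gamma>"
    "\<And>p. p tagged_division_of {a..b} \<Longrightarrow> \<gamma> fine p \<Longrightarrow> (\<Sum>(x, K)\<in>{(x, K) \<in> p. x \<in> E}. len K) < \<delta>"
proof -
  have "((indicator E :: real \<Rightarrow> real) has_integral 0) {a..b}"
    using assms(1) unfolding negligible_def by (metis cbox_interval)
  then obtain \<gamma> where "gauge \<gamma>" and \<gamma>: "\<And>p. p tagged_division_of {a..b} \<Longrightarrow> \<gamma> fine p \<Longrightarrow>
      \<bar>\<Sum>(x, K)\<in>p. len K * indicator E x\<bar> < \<delta>"
    using assms(2) by (auto simp: has_integral_real)
  show ?thesis
  proof (rule that[OF \<open>gauge \<gamma>\<close>])
    fix p assume p: "p tagged_division_of {a..b}" "\<gamma> fine p"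
    have "(\<Sum>(x, K)\<in>p. len K * indicator E x) = (\<Sum>(x, K)\<in>p. if x \<in> E then len K else 0)"
      by (intro sum.cong) (auto simp: indicator_def)
    also have "\<dots> = (\<Sum>(x, K)\<in>{(x, K) \<in> p. x \<in> E}. len K)"
      using tagged_division_ofD(1)[OF p(1)] by (simp add: sum.inter_filter case_prod_unfold)
    finally show "(\<Sum>(x, K)\<in>{(x, K) \<in> p. x \<in> E}. len K) < \<delta>" using \<gamma>[OF p] by simp
  qed
qed

lemma straddle_small_gauge:
  assumes small: "\<forall>t\<in>{a..b} - E. straddle_small {a..b} t (\<lambda>u v. g v - g u)"
    and "\<epsilon> > 0"
  obtains \<gamma> where "gauge \<gamma>"
    "\<And>p x K. p tagged_division_of {a..b} \<Longrightarrow> \<gamma> fine p \<Longrightarrow> (x, K) \<in> p \<Longrightarrow> x \<notin> E \<Longrightarrow>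
       g (Sup K) - g (Inf K) \<le> \<epsilon> * len K"
proof -
  have "\<forall>t\<in>{a..b} - E. \<exists>d>0. \<forall>u v. u \<in> {a..b} \<longrightarrow> v \<in> {a..b} \<longrightarrow> u \<le> t \<longrightarrow> t \<le> v \<longrightarrow>
      v - u < d \<longrightarrow> g v - g u \<le> \<epsilon> * (v - u)"
    using small \<open>\<epsilon> > 0\<close> unfolding straddle_small_def by blast
  then obtain d where d: "\<And>t. t \<in> {a..b} - E \<Longrightarrow> d t > 0"
    and d_small: "\<And>t u v. t \<in> {a..b} - E \<Longrightarrow> u \<in> {a..b} \<Longrightarrow> v \<in> {a..b} \<Longrightarrow> u \<le> t \<Longrightarrow> t \<le> v \<Longrightarrow>
      v - u < d t \<Longrightarrow> g v - g u \<le> \<epsilon> * (v - u)"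
    by metis
  define \<gamma> where "\<gamma> t = (if t \<in> {a..b} - E then ball t (d t / 2) else UNIV)" for t
  have "gauge \<gamma>" using d unfolding gauge_def \<gamma>_def by auto
  then show ?thesis
  proof (rule that)
    fix p x K assume p: "p tagged_division_of {a..b}" "\<gamma> fine p" and xK: "(x, K) \<in> p" "x \<notin> E"
    note K = tagged_division_element[OF p(1) xK(1)]
    have "x \<in> {a..b}" using K by auto
    moreover have "K \<subseteq> \<gamma> x" using p(2) xK(1) unfolding fine_def by blast
    ultimately have "K \<subseteq> ball x (d x / 2)" using xK(2) unfolding \<gamma>_def by simp
    moreover have "Inf K \<in> K" "Sup K \<in> K" using K by (metis atLeastAtMost_iff order.trans order_refl)+
    ultimately have "dist x (Inf K) < d x / 2" "dist x (Sup K) < d x / 2" by auto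
    then have "Sup K - Inf K < d x" unfolding dist_real_def by linarith
    then have "g (Sup K) - g (Inf K) \<le> \<epsilon> * (Sup K - Inf K)"
      using d_small[of x "Inf K" "Sup K"] \<open>x \<in> {a..b}\<close> xK(2) K by auto
    then show "g (Sup K) - g (Inf K) \<le> \<epsilon> * len K" using K(6) by simp
  qed
qed

text \<open>The tags of a fine division split
  into good ones, where the increments are at most \<epsilon> times the length, and tags in the
  exceptional null set, whose intervals have small total length, so absolute continuity
  controls their increments.\<close>
theorem abs_cont_straddle_small_nonincreasing:
  fixes g :: "real \<Rightarrow> real"
  assumes "a \<le> b" and ac: "abs_cont_on {a..b} g" and "negligible E"
    and small: "\<And>t. t \<in> {a..b} \<Longrightarrow> t \<notin> E \<Longrightarrow> straddle_small {a..b} t (\<lambda>u v. g v - g u)"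
  shows "g b \<le> g a"
proof (rule field_le_epsilon)
  fix e :: real assume "e > 0"
  define \<epsilon> where "\<epsilon> = e / (b - a + 1)"
  have "b - a + 1 > 0" using \<open>a \<le> b\<close> by simp
  then have "\<epsilon> > 0" using \<open>e > 0\<close> unfolding \<epsilon>_def by simp
  have "\<epsilon> * (b - a) + \<epsilon> = \<epsilon> * (b - a + 1)" by (simp add: algebra_simps)
  also have "\<dots> = e" using \<open>b - a + 1 > 0\<close> unfolding \<epsilon>_def by simp
  finally have \<epsilon>_e: "\<epsilon> * (b - a) + \<epsilon> = e" .
  obtain \<delta> where "\<delta> > 0" and \<delta>: "\<And>p P. p tagged_division_of {a..b} \<Longrightarrow> P \<subseteq> p \<Longrightarrow>
      (\<Sum>(x, K)\<in>P. len K) < \<delta> \<Longrightarrow> (\<Sum>(x, K)\<in>P. g (Sup K) - g (Inf K)) < \<epsilon>"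
    by (rule abs_cont_on_tagged_subfamily[OF ac \<open>\<epsilon> > 0\<close>]) (rule that)
  obtain \<gamma>1 where "gauge \<gamma>1" and \<gamma>1: "\<And>p. p tagged_division_of {a..b} \<Longrightarrow> \<gamma>1 fine p \<Longrightarrow>
      (\<Sum>(x, K)\<in>{(x, K) \<in> p. x \<in> E}. len K) < \<delta>"
    by (rule negligible_tags_gauge[OF \<open>negligible E\<close> \<open>\<delta> > 0\<close>]) (rule that)
  have small': "\<forall>t\<in>{a..b} - E. straddle_small {a..b} t (\<lambda>u v. g v - g u)" using small by blast
  obtain \<gamma>2 where "gauge \<gamma>2" and \<gamma>2: "\<And>p x K. p tagged_division_of {a..b} \<Longrightarrow> \<gamma>2 fine p \<Longrightarrow>
      (x, K) \<in> p \<Longrightarrow> x \<notin> E \<Longrightarrow> g (Sup K) - g (Inf K) \<le> \<epsilon> * len K"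
    by (rule straddle_small_gauge[OF small' \<open>\<epsilon> > 0\<close>]) (rule that)
  obtain p where p: "p tagged_division_of {a..b}" and "(\<lambda>x. \<gamma>1 x \<inter> \<gamma>2 x) fine p"
    using fine_division_exists_real[OF gauge_Int[OF \<open>gauge \<gamma>1\<close> \<open>gauge \<gamma>2\<close>]] by blast
  then have fine: "\<gamma>1 fine p" "\<gamma>2 fine p" by (auto simp: fine_Int)
  define bad where "bad = {(x, K) \<in> p. x \<in> E}"
  define good where "good = {(x, K) \<in> p. x \<notin> E}"
  have "finite p" using tagged_division_ofD(1)[OF p] .
  have "good \<subseteq> p" "bad \<subseteq> p" unfolding good_def bad_def by auto
  then have "finite good" "finite bad" using \<open>finite p\<close> finite_subset by blast+
  have "g b - g a = (\<Sum>(x, K)\<in>p. g (Sup K) - g (Inf K))"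
    using additive_tagged_division_1[OF \<open>a \<le> b\<close> p, of g] by simp
  also have "\<dots> = (\<Sum>(x, K)\<in>good. g (Sup K) - g (Inf K)) + (\<Sum>(x, K)\<in>bad. g (Sup K) - g (Inf K))"
    using \<open>finite good\<close> \<open>finite bad\<close> unfolding good_def bad_def
    by (subst sum.union_disjoint[symmetric]) (auto intro!: sum.cong)
  also have "(\<Sum>(x, K)\<in>good. g (Sup K) - g (Inf K)) \<le> (\<Sum>(x, K)\<in>good. \<epsilon> * len K)"
    using \<gamma>2[OF p fine(2)] unfolding good_def by (intro sum_mono) auto
  also have "\<dots> \<le> (\<Sum>(x, K)\<in>p. \<epsilon> * len K)"
    using \<open>finite p\<close> \<open>\<epsilon> > 0\<close> unfolding good_def by (intro sum_mono2) auto
  also have "\<dots> = \<epsilon> * (b - a)"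
    using additive_content_tagged_division[OF p[unfolded cbox_interval[symmetric]]] \<open>a \<le> b\<close>
    by (simp add: sum_distrib_left[symmetric] case_prod_unfold)
  also have "(\<Sum>(x, K)\<in>bad. g (Sup K) - g (Inf K)) < \<epsilon>"
    using \<delta>[OF p _ \<gamma>1[OF p fine(1)]] unfolding bad_def by blast
  finally show "g b \<le> g a + e" using \<epsilon>_e by simp
qed

lemma straddle_smallE:
  assumes "straddle_small I t h" "\<epsilon> > 0"
  obtains d where "d > 0"
    "\<And>u v. u \<in> I \<Longrightarrow> v \<in> I \<Longrightarrow> u \<le> t \<Longrightarrow> t \<le> v \<Longrightarrow> v - u < d \<Longrightarrow> h u v \<le> \<epsilon> * (v - u)"
  using assms unfolding straddle_small_def by meson

lemma straddle_small_zero: "straddle_small I t (\<lambda>u v. 0)"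
  unfolding straddle_small_def by (auto intro!: exI[of _ 1])

lemma straddle_small_if:
  assumes "c \<Longrightarrow> straddle_small I t h"
  shows "straddle_small I t (\<lambda>u v. if c then h u v else 0)"
  using assms by (cases c) (simp_all add: straddle_small_zero)

lemma straddle_small_add:
  assumes "straddle_small I t h1" "straddle_small I t h2"
  shows "straddle_small I t (\<lambda>u v. h1 u v + h2 u v)"
  unfolding straddle_small_def
proof (intro allI impI)
  fix \<epsilon> :: real assume "\<epsilon> > 0"
  then have "\<epsilon> / 2 > 0" by simp
  obtain d1 where "d1 > 0" and d1: "\<And>u v. u \<in> I \<Longrightarrow> v \<in> I \<Longrightarrow> u \<le> t \<Longrightarrow> t \<le> v \<Longrightarrow>
      v - u < d1 \<Longrightarrow> h1 u v \<le> \<epsilon> / 2 * (v - u)"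
    by (rule straddle_smallE[OF assms(1) \<open>\<epsilon> / 2 > 0\<close>]) (rule that)
  obtain d2 where "d2 > 0" and d2: "\<And>u v. u \<in> I \<Longrightarrow> v \<in> I \<Longrightarrow> u \<le> t \<Longrightarrow> t \<le> v \<Longrightarrow>
      v - u < d2 \<Longrightarrow> h2 u v \<le> \<epsilon> / 2 * (v - u)"
    by (rule straddle_smallE[OF assms(2) \<open>\<epsilon> / 2 > 0\<close>]) (rule that)
  show "\<exists>d>0. \<forall>u v. u \<in> I \<longrightarrow> v \<in> I \<longrightarrow> u \<le> t \<longrightarrow> t \<le> v \<longrightarrow> v - u < d \<longrightarrow>
      h1 u v + h2 u v \<le> \<epsilon> * (v - u)"
  proof (intro exI[of _ "min d1 d2"] conjI allI impI)
    fix u v assume uv: "u \<in> I" "v \<in> I" "u \<le> t" "t \<le> v" "v - u < min d1 d2"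
    then have "h1 u v \<le> \<epsilon> / 2 * (v - u)" "h2 u v \<le> \<epsilon> / 2 * (v - u)" using d1 d2 by simp_all
    then show "h1 u v + h2 u v \<le> \<epsilon> * (v - u)" by (simp add: field_simps)
  qed (use \<open>d1 > 0\<close> \<open>d2 > 0\<close> in simp)
qed

lemma straddle_small_scale:
  assumes "c \<ge> 0" "straddle_small I t h"
  shows "straddle_small I t (\<lambda>u v. c * h u v)"
  unfolding straddle_small_def
proof (intro allI impI)
  fix \<epsilon> :: real assume "\<epsilon> > 0"
  then have "\<epsilon> / (c + 1) > 0" using assms(1) by simp
  obtain d where "d > 0" and d: "\<And>u v. u \<in> I \<Longrightarrow> v \<in> I \<Longrightarrow> u \<le> t \<Longrightarrow> t \<le> v \<Longrightarrow>
      v - u < d \<Longrightarrow> h u v \<le> \<epsilon> / (c + 1) * (v - u)"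
    by (rule straddle_smallE[OF assms(2) \<open>\<epsilon> / (c + 1) > 0\<close>]) (rule that)
  show "\<exists>d>0. \<forall>u v. u \<in> I \<longrightarrow> v \<in> I \<longrightarrow> u \<le> t \<longrightarrow> t \<le> v \<longrightarrow> v - u < d \<longrightarrow>
      c * h u v \<le> \<epsilon> * (v - u)"
  proof (intro exI[of _ d] conjI allI impI)
    fix u v assume uv: "u \<in> I" "v \<in> I" "u \<le> t" "t \<le> v" "v - u < d"
    then have "h u v \<le> \<epsilon> / (c + 1) * (v - u)" by (rule d)
    then have "c * h u v \<le> c * (\<epsilon> / (c + 1) * (v - u))" using assms(1) by (rule mult_left_mono)
    also have "\<dots> = c / (c + 1) * (\<epsilon> * (v - u))" by simp
    also have "\<dots> \<le> 1 * (\<epsilon> * (v - u))"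
      using assms(1) uv \<open>\<epsilon> > 0\<close> by (intro mult_right_mono) auto
    finally show "c * h u v \<le> \<epsilon> * (v - u)" by simp
  qed (use \<open>d > 0\<close> in simp)
qed

lemma straddle_small_sum:
  assumes "finite A" "\<And>x. x \<in> A \<Longrightarrow> straddle_small I t (h x)"
  shows "straddle_small I t (\<lambda>u v. \<Sum>x\<in>A. h x u v)"
  using assms by (induction A rule: finite_induct) (simp_all add: straddle_small_zero straddle_small_add)

lemma straddle_small_mono:
  assumes "straddle_small I t h'"
    and "\<And>u v. u \<in> I \<Longrightarrow> v \<in> I \<Longrightarrow> u \<le> t \<Longrightarrow> t \<le> v \<Longrightarrow> h u v \<le> h' u v"
  shows "straddle_small I t h"
  using assms unfolding straddle_small_def by (meson order_trans)

lemma straddle_small_subset: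
  assumes "straddle_small I t h" "J \<subseteq> I"
  shows "straddle_small J t h"
  using assms unfolding straddle_small_def by (meson subsetD)

lemma straddle_small_deriv_zero:
  assumes "(f has_real_derivative 0) (at t within I)"
  shows "straddle_small I t (\<lambda>u v. \<bar>f v - f u\<bar>)"
  unfolding straddle_small_def
proof (intro allI impI)
  fix \<epsilon> :: real assume "\<epsilon> > 0"
  have "((\<lambda>y. (f y - f t) / (y - t)) \<longlongrightarrow> 0) (at t within I)"
    using assms by (simp add: has_field_derivative_iff)
  then have "eventually (\<lambda>y. dist ((f y - f t) / (y - t)) 0 < \<epsilon>) (at t within I)"
    using \<open>\<epsilon> > 0\<close> tendstoD by blast
  then obtain d where "d > 0" and d: "\<And>y. y \<in> I \<Longrightarrow> y \<noteq> t \<Longrightarrow> dist y t < d \<Longrightarrow>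
      dist ((f y - f t) / (y - t)) 0 < \<epsilon>"
    unfolding eventually_at by blast
  have near: "\<bar>f y - f t\<bar> \<le> \<epsilon> * \<bar>y - t\<bar>" if "y \<in> I" "\<bar>y - t\<bar> < d" for y
  proof (cases "y = t")
    case False
    then have "\<bar>f y - f t\<bar> / \<bar>y - t\<bar> < \<epsilon>"
      using d[OF that(1) False] that(2) by (simp add: dist_real_def abs_divide)
    then show ?thesis using False by (simp add: divide_less_eq less_imp_le)
  qed simp
  show "\<exists>d>0. \<forall>u v. u \<in> I \<longrightarrow> v \<in> I \<longrightarrow> u \<le> t \<longrightarrow> t \<le> v \<longrightarrow> v - u < d \<longrightarrow>
      \<bar>f v - f u\<bar> \<le> \<epsilon> * (v - u)"
  proof (intro exI[of _ d] conjI allI impI)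
    fix u v assume uv: "u \<in> I" "v \<in> I" "u \<le> t" "t \<le> v" "v - u < d"
    then have "\<bar>f v - f t\<bar> \<le> \<epsilon> * (v - t)" "\<bar>f u - f t\<bar> \<le> \<epsilon> * (t - u)"
      using near[of v] near[of u] by auto
    then show "\<bar>f v - f u\<bar> \<le> \<epsilon> * (v - u)" by (simp add: algebra_simps abs_diff_le_iff)
  qed (use \<open>d > 0\<close> in simp)
qed

lemma straddle_small_continuous_factor:
  fixes f :: "real \<Rightarrow> real"
  assumes "continuous_on I f" "t \<in> I" "c \<ge> 0"
  shows "straddle_small I t (\<lambda>u v. c * \<bar>f v - f t\<bar> * (v - u))"
  unfolding straddle_small_def
proof (intro allI impI)
  fix \<epsilon> :: real assume "\<epsilon> > 0"
  then have "\<epsilon> / (c + 1) > 0" using assms(3) by simp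
  then obtain d where "d > 0" and d: "\<And>v. v \<in> I \<Longrightarrow> dist v t < d \<Longrightarrow> dist (f v) (f t) < \<epsilon> / (c + 1)"
    using assms(1,2) unfolding continuous_on_iff by metis
  show "\<exists>d>0. \<forall>u v. u \<in> I \<longrightarrow> v \<in> I \<longrightarrow> u \<le> t \<longrightarrow> t \<le> v \<longrightarrow> v - u < d \<longrightarrow>
      c * \<bar>f v - f t\<bar> * (v - u) \<le> \<epsilon> * (v - u)"
  proof (intro exI[of _ d] conjI allI impI)
    fix u v assume uv: "u \<in> I" "v \<in> I" "u \<le> t" "t \<le> v" "v - u < d"
    then have "\<bar>f v - f t\<bar> \<le> \<epsilon> / (c + 1)" using d[of v] by (simp add: dist_real_def)
    then have "c * \<bar>f v - f t\<bar> \<le> c * (\<epsilon> / (c + 1))" using assms(3) by (rule mult_left_mono)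
    also have "\<dots> \<le> \<epsilon>" using assms(3) \<open>\<epsilon> > 0\<close> by (simp add: field_simps)
    finally show "c * \<bar>f v - f t\<bar> * (v - u) \<le> \<epsilon> * (v - u)"
      using uv by (intro mult_right_mono) auto
  qed (use \<open>d > 0\<close> in simp)
qed

lemma powr_tangent_le:
  fixes x y \<alpha> :: real
  assumes "\<alpha> > 0" "x \<ge> 0" "y \<ge> 0"
  shows "x powr (1 + \<alpha>) - y powr (1 + \<alpha>) \<le> (1 + \<alpha>) * x powr \<alpha> * (x - y)"
proof (cases "x = 0 \<or> y = 0")
  case True
  then show ?thesis using assms by (auto simp: powr_add algebra_simps)
next
  case False
  then have "x > 0" "y > 0" using assms by auto
  have convex: "convex_on {0<..} (\<lambda>z::real. z powr (1 + \<alpha>))" using powr_convex assms by simp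
  have deriv: "((\<lambda>z. z powr (1 + \<alpha>)) has_field_derivative ((1 + \<alpha>) * x powr \<alpha>)) (at x within {0<..})"
    using \<open>x > 0\<close> by (auto intro!: derivative_eq_intros)
  have "y powr (1 + \<alpha>) - x powr (1 + \<alpha>) \<ge> (1 + \<alpha>) * x powr \<alpha> * (y - x)"
    by (rule convex_on_imp_above_tangent[OF convex _ _ _ deriv])
      (use \<open>x > 0\<close> \<open>y > 0\<close> in \<open>auto simp: interior_open\<close>)
  then show ?thesis by (simp add: algebra_simps)
qed

lemma powr_lipschitz:
  fixes a b B \<alpha> :: real
  assumes "\<alpha> > 0" "0 \<le> a" "a \<le> B" "0 \<le> b" "b \<le> B"
  shows "\<bar>a powr (1 + \<alpha>) - b powr (1 + \<alpha>)\<bar> \<le> (1 + \<alpha>) * B powr \<alpha> * \<bar>a - b\<bar>"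
proof -
  have slope: "(1 + \<alpha>) * z powr \<alpha> \<le> (1 + \<alpha>) * B powr \<alpha>" if "0 \<le> z" "z \<le> B" for z
    using assms that by (intro mult_left_mono powr_mono2) auto
  have "a powr (1 + \<alpha>) - b powr (1 + \<alpha>) \<le> (1 + \<alpha>) * B powr \<alpha> * \<bar>a - b\<bar>"
  proof -
    have "a powr (1 + \<alpha>) - b powr (1 + \<alpha>) \<le> (1 + \<alpha>) * a powr \<alpha> * (a - b)"
      using powr_tangent_le assms by blast
    also have "\<dots> \<le> (1 + \<alpha>) * B powr \<alpha> * \<bar>a - b\<bar>"
      using slope[of a] assms
      by (cases "b \<le> a") (auto intro: mult_mono order_trans[OF _ zero_le_mult_iff[THEN iffD2]]
        simp: mult_nonneg_nonpos)
    finally show ?thesis .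
  qed
  moreover have "b powr (1 + \<alpha>) - a powr (1 + \<alpha>) \<le> (1 + \<alpha>) * B powr \<alpha> * \<bar>a - b\<bar>"
  proof -
    have "b powr (1 + \<alpha>) - a powr (1 + \<alpha>) \<le> (1 + \<alpha>) * b powr \<alpha> * (b - a)"
      using powr_tangent_le assms by blast
    also have "\<dots> \<le> (1 + \<alpha>) * B powr \<alpha> * \<bar>a - b\<bar>"
      using slope[of b] assms
      by (cases "a \<le> b") (auto intro: mult_mono order_trans[OF _ zero_le_mult_iff[THEN iffD2]]
        simp: mult_nonneg_nonpos)
    finally show ?thesis .
  qed
  ultimately show ?thesis by (simp add: abs_le_iff)
qed

lemma card_mean_powr_le_sum_powr:
  fixes x :: "'i \<Rightarrow> real" and \<alpha> :: real
  assumes "finite I" "I \<noteq> {}" "\<alpha> > 0" "\<And>i. i \<in> I \<Longrightarrow> 0 \<le> x i"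
  shows "card I * ((\<Sum>i\<in>I. x i) / card I) powr (1 + \<alpha>) \<le> (\<Sum>i\<in>I. x i powr (1 + \<alpha>))"
proof -
  define m where "m = (\<Sum>i\<in>I. x i) / card I"
  have "card I > 0" using assms(1,2) by (simp add: card_gt_0_iff)
  have "0 \<le> m" unfolding m_def using assms(4) by (simp add: sum_nonneg)
  have "(\<Sum>i\<in>I. m powr (1 + \<alpha>) - x i powr (1 + \<alpha>)) \<le> (\<Sum>i\<in>I. (1 + \<alpha>) * m powr \<alpha> * (m - x i))"
    using powr_tangent_le[OF assms(3) \<open>0 \<le> m\<close>] assms(4) by (intro sum_mono) auto
  also have "\<dots> = (1 + \<alpha>) * m powr \<alpha> * (\<Sum>i\<in>I. m - x i)" by (simp add: sum_distrib_left)
  also have "(\<Sum>i\<in>I. m - x i) = card I * m - (\<Sum>i\<in>I. x i)" by (simp add: sum_subtractf)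
  also have "\<dots> = 0" using \<open>card I > 0\<close> unfolding m_def by simp
  finally show ?thesis unfolding m_def[symmetric] by (simp add: sum_subtractf)
qed

lemma sum_powr_le_powr_sum:
  fixes a :: "'i \<Rightarrow> real" and \<alpha> :: real
  assumes "\<alpha> > 0" "\<And>i. i \<in> I \<Longrightarrow> 0 \<le> a i"
  shows "(\<Sum>i\<in>I. a i powr (1 + \<alpha>)) \<le> (\<Sum>i\<in>I. a i) powr (1 + \<alpha>)"
proof (cases "finite I")
  case True
  define A where "A = (\<Sum>i\<in>I. a i)"
  have "0 \<le> A" unfolding A_def using assms(2) by (simp add: sum_nonneg)
  have "(\<Sum>i\<in>I. a i powr (1 + \<alpha>)) \<le> (\<Sum>i\<in>I. a i * A powr \<alpha>)"
  proof (rule sum_mono)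
    fix i assume "i \<in> I"
    then have "a i \<le> A" unfolding A_def using True assms(2) by (intro member_le_sum) auto
    then have "a i * a i powr \<alpha> \<le> a i * A powr \<alpha>"
      using assms \<open>i \<in> I\<close> by (intro mult_left_mono powr_mono2) auto
    then show "a i powr (1 + \<alpha>) \<le> a i * A powr \<alpha>" using assms(2)[OF \<open>i \<in> I\<close>] by (simp add: powr_add)
  qed
  also have "\<dots> = A powr (1 + \<alpha>)" using \<open>0 \<le> A\<close> unfolding A_def by (simp add: sum_distrib_right powr_add)
  finally show ?thesis unfolding A_def .
qed simp

lemma sum_le_card_powr_sum:
  fixes x a :: "'i \<Rightarrow> real" and \<alpha> :: real
  assumes "finite I" "I \<noteq> {}" "\<alpha> > 0"
    and "\<And>i. i \<in> I \<Longrightarrow> 0 \<le> x i" "\<And>i. i \<in> I \<Longrightarrow> 0 \<le> a i"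
    and power_sums: "(\<Sum>i\<in>I. x i powr (1 + \<alpha>)) \<le> (\<Sum>i\<in>I. a i powr (1 + \<alpha>))"
  shows "(\<Sum>i\<in>I. x i) \<le> real (card I) powr (\<alpha> / (1 + \<alpha>)) * (\<Sum>i\<in>I. a i)"
proof -
  define n where "n = real (card I)"
  define p where "p = 1 + \<alpha>"
  define m where "m = (\<Sum>i\<in>I. x i) / n"
  define A where "A = (\<Sum>i\<in>I. a i)"
  have "card I > 0" using assms(1,2) by (simp add: card_gt_0_iff)
  then have "n \<ge> 1" unfolding n_def by simp
  have "p > 0" unfolding p_def using assms(3) by simp
  have "0 \<le> m" "0 \<le> A" unfolding m_def A_def using assms(4,5) \<open>n \<ge> 1\<close> by (simp_all add: sum_nonneg)
  have "n * m powr p \<le> (\<Sum>i\<in>I. x i powr p)"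
    unfolding n_def m_def p_def by (rule card_mean_powr_le_sum_powr) (use assms in auto)
  also have "\<dots> \<le> (\<Sum>i\<in>I. a i powr p)" using power_sums unfolding p_def .
  also have "\<dots> \<le> A powr p"
    unfolding A_def p_def by (rule sum_powr_le_powr_sum) (use assms in auto)
  finally have "m powr p \<le> A powr p / n" using \<open>n \<ge> 1\<close> by (simp add: field_simps)
  then have "(m powr p) powr (1 / p) \<le> (A powr p / n) powr (1 / p)"
    using \<open>p > 0\<close> by (intro powr_mono2) auto
  then have "m \<le> A / n powr (1 / p)"
    using \<open>0 \<le> m\<close> \<open>0 \<le> A\<close> \<open>n \<ge> 1\<close> \<open>p > 0\<close> by (simp add: powr_powr powr_divide)
  then have "n * m \<le> n * (A / n powr (1 / p))" using \<open>n \<ge> 1\<close> by (intro mult_left_mono) auto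
  also have "\<dots> = n powr (1 - 1 / p) * A" using \<open>n \<ge> 1\<close> by (simp add: powr_diff)
  also have "1 - 1 / p = \<alpha> / (1 + \<alpha>)" unfolding p_def using assms(3) by (simp add: field_simps)
  finally show ?thesis using \<open>n \<ge> 1\<close> unfolding n_def m_def A_def by simp
qed

lemma inner_one_le_card_powr:
  fixes x a :: "real^'n" and \<alpha> :: real
  assumes "\<alpha> > 0" "\<And>i. 0 \<le> x $ i" "\<And>i. 0 \<le> a $ i"
    and "(\<Sum>i\<in>UNIV. x $ i powr (1 + \<alpha>)) \<le> (\<Sum>i\<in>UNIV. a $ i powr (1 + \<alpha>))"
  shows "1 \<bullet> x \<le> real CARD('n) powr (\<alpha> / (1 + \<alpha>)) * (1 \<bullet> a)"
proof -
  have "(\<Sum>i\<in>UNIV. x $ i) \<le> real (card (UNIV :: 'n set)) powr (\<alpha> / (1 + \<alpha>)) * (\<Sum>i\<in>UNIV. a $ i)"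
    by (rule sum_le_card_powr_sum) (use assms in auto)
  then show ?thesis by (simp add: inner_vec_def)
qed

lemma AE_lebesgue_on_negligible:
  assumes "AE t in lebesgue_on {a..b::real}. P t"
  obtains N where "negligible N" "\<And>t. t \<in> {a..b} \<Longrightarrow> t \<notin> N \<Longrightarrow> P t"
proof -
  obtain N where N: "{x \<in> space (lebesgue_on {a..b}). \<not> P x} \<subseteq> N"
    "emeasure (lebesgue_on {a..b}) N = 0" "N \<in> sets (lebesgue_on {a..b})"
    using AE_E[OF assms] by blast
  then have "N \<in> null_sets (lebesgue_on {a..b})" by (simp add: null_sets_def)
  then have "N \<in> null_sets lebesgue" by (simp add: null_sets_restrict_space)
  then have "negligible N" by (simp add: negligible_iff_null_sets)
  then show ?thesis using N(1) that by auto
qed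

locale fluid_model =
  fixes S :: "(real^'n) set" and lam :: "real^'n" and T :: real
    and q y :: "real \<Rightarrow> real^'n" and s :: "real^'n \<Rightarrow> real \<Rightarrow> real"
  assumes finite_S: "finite S" and S_nonempty: "S \<noteq> {}" and S_nonneg: "\<forall>\<pi>\<in>S. 0 \<le> \<pi>"
    and lam_cap: "lam \<in> cap_region S"
    and solution: "fluid_solution S lam T q y s"
begin

lemma q_y_nonneg: "\<tau> \<in> {0..T} \<Longrightarrow> 0 \<le> q \<tau> \<and> 0 \<le> y \<tau>"
  using solution unfolding fluid_solution_def by blast

lemma q_nonneg: "\<tau> \<in> {0..T} \<Longrightarrow> 0 \<le> q \<tau> $ i"
  using q_y_nonneg by (simp add: less_eq_vec_def)

lemma schedule_nonneg: "\<pi> \<in> S \<Longrightarrow> 0 \<le> \<pi> $ i"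
  using S_nonneg by (simp add: less_eq_vec_def)

lemma lam_nonneg: "0 \<le> lam $ i"
  using lam_cap unfolding cap_region_def by (simp add: less_eq_vec_def)

lemma queue_equation: "\<tau> \<in> {0..T} \<Longrightarrow> q \<tau> = q 0 + \<tau> *\<^sub>R lam - (\<Sum>\<pi>\<in>S. s \<pi> \<tau> *\<^sub>R \<pi>) + y \<tau>"
  using solution unfolding fluid_solution_def by blast

lemma time_allocation: "\<tau> \<in> {0..T} \<Longrightarrow> (\<Sum>\<pi>\<in>S. s \<pi> \<tau>) = \<tau>"
  using solution unfolding fluid_solution_def by blast

lemma allocation_nonneg: "\<pi> \<in> S \<Longrightarrow> \<tau> \<in> {0..T} \<Longrightarrow> 0 \<le> s \<pi> \<tau>"
  using solution unfolding fluid_solution_def by blast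

lemma allocation_increment:
  assumes "\<pi> \<in> S" "0 \<le> u" "u \<le> v" "v \<le> T"
  shows "0 \<le> s \<pi> v - s \<pi> u" "s \<pi> v - s \<pi> u \<le> v - u"
proof -
  have mono: "s \<rho> u \<le> s \<rho> v" if "\<rho> \<in> S" for \<rho>
    using solution that assms(2-4) unfolding fluid_solution_def by (auto simp: mono_on_def)
  then show "0 \<le> s \<pi> v - s \<pi> u" using assms(1) by simp
  have "s \<pi> v - s \<pi> u \<le> (\<Sum>\<rho>\<in>S. s \<rho> v - s \<rho> u)"
    using finite_S assms(1) mono by (intro member_le_sum) auto
  also have "\<dots> = v - u" using time_allocation assms(2-4) by (simp add: sum_subtractf)
  finally show "s \<pi> v - s \<pi> u \<le> v - u" .
qed

lemma queue_increment:
  assumes "u \<in> {0..T}" "v \<in> {0..T}"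
  shows "q v $ i - q u $ i =
    (v - u) * lam $ i - (\<Sum>\<pi>\<in>S. (s \<pi> v - s \<pi> u) * \<pi> $ i) + (y v $ i - y u $ i)"
  using arg_cong[OF queue_equation[OF assms(1)], of "\<lambda>x. x $ i"]
    arg_cong[OF queue_equation[OF assms(2)], of "\<lambda>x. x $ i"]
  by (simp add: algebra_simps sum_subtractf)

lemma q_component_continuous: "continuous_on {0..T} (\<lambda>\<tau>. q \<tau> $ i)"
  using solution unfolding fluid_solution_def
  by (blast intro: abs_cont_on_imp_continuous_on abs_cont_on_component)

definition max_service :: "'n \<Rightarrow> real" where
  "max_service i = (\<Sum>\<pi>\<in>S. \<pi> $ i)"

lemma max_service_nonneg: "0 \<le> max_service i"
  unfolding max_service_def using schedule_nonneg by (simp add: sum_nonneg)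

lemma service_increment:
  assumes "0 \<le> u" "u \<le> v" "v \<le> T"
  shows "0 \<le> (\<Sum>\<pi>\<in>S. (s \<pi> v - s \<pi> u) * \<pi> $ i)"
    "(\<Sum>\<pi>\<in>S. (s \<pi> v - s \<pi> u) * \<pi> $ i) \<le> max_service i * (v - u)"
proof -
  show "0 \<le> (\<Sum>\<pi>\<in>S. (s \<pi> v - s \<pi> u) * \<pi> $ i)"
    using allocation_increment assms schedule_nonneg by (intro sum_nonneg mult_nonneg_nonneg) auto
  have "(\<Sum>\<pi>\<in>S. (s \<pi> v - s \<pi> u) * \<pi> $ i) \<le> (\<Sum>\<pi>\<in>S. (v - u) * \<pi> $ i)"
    using allocation_increment assms schedule_nonneg by (intro sum_mono mult_right_mono) auto
  also have "\<dots> = max_service i * (v - u)"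
    unfolding max_service_def by (simp add: sum_distrib_left mult.commute)
  finally show "(\<Sum>\<pi>\<in>S. (s \<pi> v - s \<pi> u) * \<pi> $ i) \<le> max_service i * (v - u)" .
qed

lemma idling_exceptional_set:
  obtains N where "negligible N" "\<And>\<tau>. \<tau> \<in> {0..T} \<Longrightarrow> \<tau> \<notin> N \<Longrightarrow>
      \<forall>i. 0 < q \<tau> $ i \<longrightarrow> ((\<lambda>u. y u $ i) has_real_derivative 0) (at \<tau> within {0..T})"
proof -
  have AE: "AE \<tau> in lebesgue_on {0..T}. \<forall>i. 0 < q \<tau> $ i \<longrightarrow>
      ((\<lambda>u. y u $ i) has_real_derivative 0) (at \<tau> within {0..T})"
    using solution unfolding fluid_solution_def by blast
  show ?thesis using AE_lebesgue_on_negligible[OF AE] that by blast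
qed

text \<open>Idling can only occur at empty queues: across an interval on which queue i stays
  positive (except possibly at its left end) the cumulative idleness y i does not grow.\<close>
lemma idleness_constant_while_positive:
  assumes "0 \<le> c" "c \<le> d" "d \<le> T" and pos: "\<And>\<tau>. c < \<tau> \<Longrightarrow> \<tau> \<le> d \<Longrightarrow> 0 < q \<tau> $ i"
  shows "y d $ i \<le> y c $ i"
proof -
  obtain N where "negligible N" and N: "\<And>\<tau>. \<tau> \<in> {0..T} \<Longrightarrow> \<tau> \<notin> N \<Longrightarrow>
      \<forall>i. 0 < q \<tau> $ i \<longrightarrow> ((\<lambda>u. y u $ i) has_real_derivative 0) (at \<tau> within {0..T})"
    by (rule idling_exceptional_set) (rule that)
  show ?thesis
  proof (rule abs_cont_straddle_small_nonincreasing[where g = "\<lambda>\<tau>. y \<tau> $ i" and E = "N \<union> {c}"])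
    show "c \<le> d" by fact
    have "abs_cont_on {0..T} (\<lambda>\<tau>. y \<tau> $ i)"
      using solution unfolding fluid_solution_def by (blast intro: abs_cont_on_component)
    then show "abs_cont_on {c..d} (\<lambda>\<tau>. y \<tau> $ i)"
      by (rule abs_cont_on_subset) (use assms in auto)
    show "negligible (N \<union> {c})" using \<open>negligible N\<close> by simp
    fix \<tau> assume \<tau>: "\<tau> \<in> {c..d}" "\<tau> \<notin> N \<union> {c}"
    then have "((\<lambda>u. y u $ i) has_real_derivative 0) (at \<tau> within {0..T})"
      using N[of \<tau>] pos[of \<tau>] assms by auto
    then have "straddle_small {0..T} \<tau> (\<lambda>u v. \<bar>y v $ i - y u $ i\<bar>)"
      by (rule straddle_small_deriv_zero)
    then have "straddle_small {c..d} \<tau> (\<lambda>u v. \<bar>y v $ i - y u $ i\<bar>)"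
      by (rule straddle_small_subset) (use assms in auto)
    then show "straddle_small {c..d} \<tau> (\<lambda>u v. y v $ i - y u $ i)"
      by (rule straddle_small_mono) simp
  qed
qed

text \<open>Over [u, v] the idleness can only
  grow up to the last time r at which queue i is empty, and up to r it is bounded by the
  service received, since q i r = 0.\<close>
lemma idleness_increment:
  assumes uv: "0 \<le> u" "u \<le> v" "v \<le> T"
  shows "y v $ i - y u $ i \<le> max_service i * (v - u)"
proof -
  define Z where "Z = {r \<in> {u..v}. q r $ i = 0}"
  show ?thesis
  proof (cases "Z = {}")
    case True
    have "y v $ i \<le> y u $ i"
    proof (rule idleness_constant_while_positive[OF uv])
      fix \<tau> assume "u < \<tau>" "\<tau> \<le> v"
      then show "0 < q \<tau> $ i"
        using True q_nonneg[of \<tau> i] uv unfolding Z_def by force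
    qed
    then show ?thesis using max_service_nonneg[of i] uv by (smt (verit) mult_nonneg_nonneg)
  next
    case False
    have "{u..v} \<subseteq> {0..T}" using uv by auto
    then have "closed Z"
      using continuous_closed_preimage_constant[OF continuous_on_subset[OF q_component_continuous]]
      unfolding Z_def by blast
    moreover have "bdd_above Z" unfolding Z_def by (rule bdd_aboveI[of _ v]) auto
    ultimately have "Sup Z \<in> Z" using False closed_contains_Sup by blast
    define r where "r = Sup Z"
    have r: "u \<le> r" "r \<le> v" "q r $ i = 0" using \<open>Sup Z \<in> Z\<close> unfolding r_def Z_def by auto
    have "y v $ i \<le> y r $ i"
    proof (rule idleness_constant_while_positive)
      show "0 \<le> r" "r \<le> v" "v \<le> T" using r uv by auto
      fix \<tau> assume "r < \<tau>" "\<tau> \<le> v"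
      then have "\<tau> \<notin> Z" using cSup_upper[OF _ \<open>bdd_above Z\<close>] unfolding r_def by fastforce
      then show "0 < q \<tau> $ i"
        using q_nonneg[of \<tau> i] \<open>r < \<tau>\<close> \<open>\<tau> \<le> v\<close> r uv unfolding Z_def by force
    qed
    moreover have "y r $ i - y u $ i \<le> max_service i * (v - u)"
    proof -
      have "q r $ i - q u $ i = (r - u) * lam $ i - (\<Sum>\<pi>\<in>S. (s \<pi> r - s \<pi> u) * \<pi> $ i) + (y r $ i - y u $ i)"
        using queue_increment[of u r i] r uv by auto
      moreover have "0 \<le> q u $ i" using q_nonneg uv by auto
      moreover have "0 \<le> (r - u) * lam $ i" using r lam_nonneg by simp
      moreover have "(\<Sum>\<pi>\<in>S. (s \<pi> r - s \<pi> u) * \<pi> $ i) \<le> max_service i * (r - u)"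
        using service_increment[of u r i] r uv by auto
      moreover have "max_service i * (r - u) \<le> max_service i * (v - u)"
        using max_service_nonneg r by (intro mult_left_mono) auto
      ultimately show ?thesis using r by linarith
    qed
    ultimately show ?thesis by linarith
  qed
qed

definition queue_rate_bound :: "'n \<Rightarrow> real" where
  "queue_rate_bound i = lam $ i + 2 * max_service i"

lemma queue_rate_bound_nonneg: "0 \<le> queue_rate_bound i"
  unfolding queue_rate_bound_def using lam_nonneg max_service_nonneg by (simp add: add_nonneg_nonneg)

text \<open>Queue i changes at rate at most queue_rate_bound i: arrivals, service and idleness
  each contribute at most lam i or max_service i.\<close>
lemma queue_lipschitz:
  assumes uv: "0 \<le> u" "u \<le> v" "v \<le> T"
  shows "\<bar>q v $ i - q u $ i\<bar> \<le> queue_rate_bound i * (v - u)"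
proof -
  have "0 \<le> y v $ i - y u $ i"
    using solution uv unfolding fluid_solution_def by (auto simp: mono_on_def)
  moreover have "0 \<le> (v - u) * lam $ i" using uv lam_nonneg by simp
  moreover note queue_increment[of u v i] idleness_increment[OF uv, of i] service_increment[OF uv, of i]
  ultimately show ?thesis using uv unfolding queue_rate_bound_def by (auto simp: abs_le_iff algebra_simps)
qed

end

context fluid_model
begin

lemma arrival_weight_le_max:
  assumes "\<And>i. 0 \<le> P $ i"
  shows "lam \<bullet> P \<le> Max ((\<lambda>\<rho>. \<rho> \<bullet> P) ` S)"
proof -
  obtain \<sigma> where \<sigma>: "\<sigma> \<in> convex hull S" "lam \<le> \<sigma>"
    using lam_cap unfolding cap_region_def by blast
  have "lam \<bullet> P \<le> \<sigma> \<bullet> P"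
    unfolding inner_vec_def using \<sigma>(2) assms
    by (intro sum_mono) (auto simp: less_eq_vec_def intro: mult_right_mono)
  also have "convex hull S \<subseteq> {x. x \<bullet> P \<le> Max ((\<lambda>\<rho>. \<rho> \<bullet> P) ` S)}"
    using finite_S by (intro hull_minimal) (auto simp: convex_halfspace_le[of P, simplified inner_commute])
  then have "\<sigma> \<bullet> P \<le> Max ((\<lambda>\<rho>. \<rho> \<bullet> P) ` S)" using \<sigma>(1) by blast
  finally show ?thesis .
qed

text \<open>Weighting the queue increments by a
  nonnegative vector P, arrivals contribute at most M (v - u), where M is the maximal weight
  of a schedule, and service contributes at least M (v - u) except for time spent on
  schedules of weight below M; idleness contributes only at queues of positive weight.\<close>
lemma weighted_queue_increment:
  fixes P :: "real^'n"
  assumes P_nonneg: "\<And>i. 0 \<le> P $ i" and uv: "0 \<le> u" "u \<le> v" "v \<le> T"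
  defines "M \<equiv> Max ((\<lambda>\<rho>. \<rho> \<bullet> P) ` S)"
  shows "(\<Sum>i\<in>UNIV. P $ i * (q v $ i - q u $ i))
    \<le> M * (\<Sum>\<pi>\<in>S. if \<pi> \<bullet> P < M then \<bar>s \<pi> v - s \<pi> u\<bar> else 0)
      + (\<Sum>i\<in>UNIV. if 0 < P $ i then P $ i * \<bar>y v $ i - y u $ i\<bar> else 0)"
proof -
  define ds where "ds \<pi> = s \<pi> v - s \<pi> u" for \<pi>
  define dy where "dy i = y v $ i - y u $ i" for i
  have ds_nonneg: "0 \<le> ds \<pi>" if "\<pi> \<in> S" for \<pi>
    using allocation_increment[OF that uv] unfolding ds_def by simp
  have M_ge: "\<pi> \<bullet> P \<le> M" if "\<pi> \<in> S" for \<pi> unfolding M_def using finite_S that by simp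
  have "(\<Sum>i\<in>UNIV. P $ i * (q v $ i - q u $ i))
      = (\<Sum>i\<in>UNIV. P $ i * ((v - u) * lam $ i - (\<Sum>\<pi>\<in>S. ds \<pi> * \<pi> $ i) + dy i))"
    using queue_increment uv unfolding ds_def dy_def by simp
  also have "\<dots> = (v - u) * (\<Sum>i\<in>UNIV. lam $ i * P $ i)
      - (\<Sum>i\<in>UNIV. \<Sum>\<pi>\<in>S. ds \<pi> * (\<pi> $ i * P $ i)) + (\<Sum>i\<in>UNIV. P $ i * dy i)"
    by (simp add: algebra_simps sum.distrib sum_subtractf sum_distrib_left)
  also have "(\<Sum>i\<in>UNIV. \<Sum>\<pi>\<in>S. ds \<pi> * (\<pi> $ i * P $ i)) = (\<Sum>\<pi>\<in>S. ds \<pi> * (\<pi> \<bullet> P))"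
    by (subst sum.swap) (simp add: inner_vec_def sum_distrib_left)
  finally have balance: "(\<Sum>i\<in>UNIV. P $ i * (q v $ i - q u $ i))
      = (v - u) * (lam \<bullet> P) - (\<Sum>\<pi>\<in>S. ds \<pi> * (\<pi> \<bullet> P)) + (\<Sum>i\<in>UNIV. P $ i * dy i)"
    by (simp add: inner_vec_def)
  have arrivals: "(v - u) * (lam \<bullet> P) \<le> (v - u) * M"
    using arrival_weight_le_max[OF P_nonneg] uv unfolding M_def by (intro mult_left_mono) auto
  have "(\<Sum>\<pi>\<in>S. ds \<pi> * M - M * (if \<pi> \<bullet> P < M then \<bar>s \<pi> v - s \<pi> u\<bar> else 0))
      \<le> (\<Sum>\<pi>\<in>S. ds \<pi> * (\<pi> \<bullet> P))"
  proof (rule sum_mono)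
    fix \<pi> assume "\<pi> \<in> S"
    show "ds \<pi> * M - M * (if \<pi> \<bullet> P < M then \<bar>s \<pi> v - s \<pi> u\<bar> else 0) \<le> ds \<pi> * (\<pi> \<bullet> P)"
    proof (cases "\<pi> \<bullet> P < M")
      case True
      have "0 \<le> \<pi> \<bullet> P"
        using schedule_nonneg[OF \<open>\<pi> \<in> S\<close>] P_nonneg by (simp add: inner_vec_def sum_nonneg)
      then show ?thesis using True ds_nonneg[OF \<open>\<pi> \<in> S\<close>] unfolding ds_def by simp
    next
      case False
      then show ?thesis using M_ge[OF \<open>\<pi> \<in> S\<close>] by simp
    qed
  qed
  moreover have "(\<Sum>\<pi>\<in>S. ds \<pi> * M - M * (if \<pi> \<bullet> P < M then \<bar>s \<pi> v - s \<pi> u\<bar> else 0))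
      = (v - u) * M - M * (\<Sum>\<pi>\<in>S. if \<pi> \<bullet> P < M then \<bar>s \<pi> v - s \<pi> u\<bar> else 0)"
    using time_allocation uv unfolding ds_def
    by (simp add: sum_subtractf sum_distrib_left sum_distrib_right[symmetric])
  ultimately have service: "(v - u) * M - M * (\<Sum>\<pi>\<in>S. if \<pi> \<bullet> P < M then \<bar>s \<pi> v - s \<pi> u\<bar> else 0)
      \<le> (\<Sum>\<pi>\<in>S. ds \<pi> * (\<pi> \<bullet> P))" by simp
  have idleness: "(\<Sum>i\<in>UNIV. P $ i * dy i)
      \<le> (\<Sum>i\<in>UNIV. if 0 < P $ i then P $ i * \<bar>y v $ i - y u $ i\<bar> else 0)"
  proof (rule sum_mono)
    fix i
    show "P $ i * dy i \<le> (if 0 < P $ i then P $ i * \<bar>y v $ i - y u $ i\<bar> else 0)"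
    proof (cases "0 < P $ i")
      case True
      then show ?thesis unfolding dy_def by (simp add: mult_left_mono)
    next
      case False
      then show ?thesis using P_nonneg[of i] by simp
    qed
  qed
  from balance arrivals service idleness show ?thesis by linarith
qed

end

locale MW_fluid_model = fluid_model S lam T q y s
  for S :: "(real^'n) set" and lam :: "real^'n" and T :: real
    and q y :: "real \<Rightarrow> real^'n" and s :: "real^'n \<Rightarrow> real \<Rightarrow> real" +
  fixes \<alpha> :: real
  assumes alpha_pos: "\<alpha> > 0"
    and max_weight: "AE t in lebesgue_on {0..T}. \<forall>\<pi>\<in>S.
      \<pi> \<bullet> vpowr (q t) \<alpha> < Max ((\<lambda>\<rho>. \<rho> \<bullet> vpowr (q t) \<alpha>) ` S) \<longrightarrow>
      (s \<pi> has_real_derivative 0) (at t within {0..T})"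
begin

definition lyapunov :: "real \<Rightarrow> real" where
  "lyapunov \<tau> = (\<Sum>i\<in>UNIV. q \<tau> $ i powr (1 + \<alpha>))"

lemma queue_bound:
  assumes "\<tau> \<in> {0..T}"
  shows "q \<tau> $ i \<le> q 0 $ i + queue_rate_bound i * T"
proof -
  have "\<bar>q \<tau> $ i - q 0 $ i\<bar> \<le> queue_rate_bound i * \<tau>" using queue_lipschitz[of 0 \<tau> i] assms by auto
  moreover have "queue_rate_bound i * \<tau> \<le> queue_rate_bound i * T"
    using assms queue_rate_bound_nonneg by (intro mult_left_mono) auto
  ultimately show ?thesis by (simp add: abs_le_iff)
qed

text \<open>The Lyapunov function is Lipschitz on [0, T], because q is Lipschitz and bounded
  and z powr (1 + \<alpha>) is Lipschitz on bounded intervals; hence it is absolutely continuous.\<close>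
lemma lyapunov_lipschitz:
  obtains L where "\<And>u v. u \<in> {0..T} \<Longrightarrow> v \<in> {0..T} \<Longrightarrow> \<bar>lyapunov v - lyapunov u\<bar> \<le> L * \<bar>v - u\<bar>"
proof -
  define B where "B i = q 0 $ i + queue_rate_bound i * T" for i
  define L where "L = (\<Sum>i\<in>UNIV. (1 + \<alpha>) * B i powr \<alpha> * queue_rate_bound i)"
  have ordered: "\<bar>lyapunov v - lyapunov u\<bar> \<le> L * (v - u)" if uv: "0 \<le> u" "u \<le> v" "v \<le> T" for u v
  proof -
    have "\<bar>lyapunov v - lyapunov u\<bar> \<le> (\<Sum>i\<in>UNIV. \<bar>q v $ i powr (1 + \<alpha>) - q u $ i powr (1 + \<alpha>)\<bar>)"
      unfolding lyapunov_def sum_subtractf[symmetric] by (rule sum_abs)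
    also have "\<dots> \<le> (\<Sum>i\<in>UNIV. (1 + \<alpha>) * B i powr \<alpha> * queue_rate_bound i * (v - u))"
    proof (rule sum_mono)
      fix i
      have "\<bar>q v $ i powr (1 + \<alpha>) - q u $ i powr (1 + \<alpha>)\<bar> \<le> (1 + \<alpha>) * B i powr \<alpha> * \<bar>q v $ i - q u $ i\<bar>"
        using uv unfolding B_def by (intro powr_lipschitz alpha_pos q_nonneg queue_bound) auto
      also have "\<dots> \<le> (1 + \<alpha>) * B i powr \<alpha> * (queue_rate_bound i * (v - u))"
        using queue_lipschitz[OF uv] alpha_pos by (intro mult_left_mono) auto
      finally show "\<bar>q v $ i powr (1 + \<alpha>) - q u $ i powr (1 + \<alpha>)\<bar>
          \<le> (1 + \<alpha>) * B i powr \<alpha> * queue_rate_bound i * (v - u)" by (simp add: mult.assoc)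
    qed
    also have "\<dots> = L * (v - u)" unfolding L_def by (simp add: sum_distrib_right)
    finally show ?thesis .
  qed
  show ?thesis
  proof (rule that)
    fix u v assume "u \<in> {0..T}" "v \<in> {0..T}"
    then show "\<bar>lyapunov v - lyapunov u\<bar> \<le> L * \<bar>v - u\<bar>"
      using ordered[of u v] ordered[of v u] by (cases "u \<le> v") (auto simp: abs_minus_commute)
  qed
qed

lemma lyapunov_abs_cont: "abs_cont_on {0..T} lyapunov"
proof -
  obtain L where "\<And>u v. u \<in> {0..T} \<Longrightarrow> v \<in> {0..T} \<Longrightarrow> \<bar>lyapunov v - lyapunov u\<bar> \<le> L * \<bar>v - u\<bar>"
    by (rule lyapunov_lipschitz) (rule that)
  then show ?thesis by (intro lipschitz_imp_abs_cont_on) simp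
qed

lemma lyapunov_increment:
  assumes uv: "0 \<le> u" "u \<le> v" "v \<le> T"
  shows "lyapunov v - lyapunov u \<le> (1 + \<alpha>) * (\<Sum>i\<in>UNIV. P $ i * (q v $ i - q u $ i))
    + (\<Sum>i\<in>UNIV. (1 + \<alpha>) * queue_rate_bound i * \<bar>q v $ i powr \<alpha> - P $ i\<bar> * (v - u))"
proof -
  define dq where "dq i = q v $ i - q u $ i" for i
  have "lyapunov v - lyapunov u \<le> (\<Sum>i\<in>UNIV. (1 + \<alpha>) * q v $ i powr \<alpha> * dq i)"
    unfolding lyapunov_def dq_def sum_subtractf[symmetric] using uv
    by (intro sum_mono powr_tangent_le alpha_pos q_nonneg) auto
  also have "\<dots> = (1 + \<alpha>) * (\<Sum>i\<in>UNIV. P $ i * dq i) + (\<Sum>i\<in>UNIV. (1 + \<alpha>) * (q v $ i powr \<alpha> - P $ i) * dq i)"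
    by (simp add: sum_distrib_left sum.distrib[symmetric] algebra_simps)
  also have "(\<Sum>i\<in>UNIV. (1 + \<alpha>) * (q v $ i powr \<alpha> - P $ i) * dq i)
      \<le> (\<Sum>i\<in>UNIV. (1 + \<alpha>) * queue_rate_bound i * \<bar>q v $ i powr \<alpha> - P $ i\<bar> * (v - u))"
  proof (rule sum_mono)
    fix i
    have "(q v $ i powr \<alpha> - P $ i) * dq i \<le> \<bar>q v $ i powr \<alpha> - P $ i\<bar> * \<bar>dq i\<bar>"
      by (metis abs_ge_self abs_mult)
    then have "(1 + \<alpha>) * (q v $ i powr \<alpha> - P $ i) * dq i \<le> (1 + \<alpha>) * \<bar>q v $ i powr \<alpha> - P $ i\<bar> * \<bar>dq i\<bar>"
      using alpha_pos by (simp add: mult.assoc mult_left_mono)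
    also have "\<dots> \<le> (1 + \<alpha>) * \<bar>q v $ i powr \<alpha> - P $ i\<bar> * (queue_rate_bound i * (v - u))"
      unfolding dq_def using queue_lipschitz[OF uv] alpha_pos by (intro mult_left_mono) auto
    finally show "(1 + \<alpha>) * (q v $ i powr \<alpha> - P $ i) * dq i
        \<le> (1 + \<alpha>) * queue_rate_bound i * \<bar>q v $ i powr \<alpha> - P $ i\<bar> * (v - u)"
      by (simp add: algebra_simps)
  qed
  finally show ?thesis unfolding dq_def by simp
qed

end

context MW_fluid_model
begin

lemma max_weight_exceptional_set:
  obtains N where "negligible N" "\<And>\<tau>. \<tau> \<in> {0..T} \<Longrightarrow> \<tau> \<notin> N \<Longrightarrow> \<forall>\<pi>\<in>S.
      \<pi> \<bullet> vpowr (q \<tau>) \<alpha> < Max ((\<lambda>\<rho>. \<rho> \<bullet> vpowr (q \<tau>) \<alpha>) ` S) \<longrightarrow>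
      (s \<pi> has_real_derivative 0) (at \<tau> within {0..T})"
  using AE_lebesgue_on_negligible[OF max_weight] that by blast

text \<open>At a time where both the idling and the max-weight conditions hold, the Lyapunov
  function has nonpositive upper derivative: expanding around the weights P = q \<tau>^\<alpha>, the
  first-order term is bounded by increments of s and y that are flat at \<tau>, and the remainder
  is small by continuity of q.\<close>
lemma lyapunov_straddle_small:
  assumes \<tau>: "\<tau> \<in> {0..T}"
    and idle: "\<And>i. 0 < q \<tau> $ i \<Longrightarrow> ((\<lambda>u. y u $ i) has_real_derivative 0) (at \<tau> within {0..T})"
    and mw: "\<And>\<pi>. \<pi> \<in> S \<Longrightarrow> \<pi> \<bullet> vpowr (q \<tau>) \<alpha> < Max ((\<lambda>\<rho>. \<rho> \<bullet> vpowr (q \<tau>) \<alpha>) ` S) \<Longrightarrow>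
      (s \<pi> has_real_derivative 0) (at \<tau> within {0..T})"
  shows "straddle_small {0..T} \<tau> (\<lambda>u v. lyapunov v - lyapunov u)"
proof -
  define P where "P = vpowr (q \<tau>) \<alpha>"
  define M where "M = Max ((\<lambda>\<rho>. \<rho> \<bullet> P) ` S)"
  have P_comp: "P $ i = q \<tau> $ i powr \<alpha>" for i unfolding P_def vpowr_def by simp
  have P_nonneg: "0 \<le> P $ i" for i by (simp add: P_comp)
  have M_nonneg: "0 \<le> M"
  proof -
    obtain \<pi> where "\<pi> \<in> S" using S_nonempty by blast
    then have "0 \<le> \<pi> \<bullet> P" using schedule_nonneg P_nonneg by (simp add: inner_vec_def sum_nonneg)
    also have "\<dots> \<le> M" unfolding M_def using finite_S \<open>\<pi> \<in> S\<close> by simp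
    finally show ?thesis .
  qed
  define h1 where "h1 u v = (\<Sum>\<pi>\<in>S. if \<pi> \<bullet> P < M then \<bar>s \<pi> v - s \<pi> u\<bar> else 0)" for u v
  define h2 where "h2 u v = (\<Sum>i\<in>UNIV. if 0 < P $ i then P $ i * \<bar>y v $ i - y u $ i\<bar> else 0)" for u v
  define h3 where "h3 u v = (\<Sum>i\<in>UNIV. (1 + \<alpha>) * queue_rate_bound i * \<bar>q v $ i powr \<alpha> - P $ i\<bar> * (v - u))"
    for u v
  have "straddle_small {0..T} \<tau> h1"
    unfolding h1_def using finite_S
    by (intro straddle_small_sum straddle_small_if straddle_small_deriv_zero mw)
      (auto simp: P_def M_def)
  moreover have "straddle_small {0..T} \<tau> h2"
  proof -
    have "0 < q \<tau> $ i" if "0 < P $ i" for i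
      using that q_nonneg[OF \<tau>, of i] by (cases "q \<tau> $ i = 0") (auto simp: P_comp)
    then show ?thesis unfolding h2_def
      by (intro straddle_small_sum straddle_small_if straddle_small_scale[OF P_nonneg]
          straddle_small_deriv_zero idle) auto
  qed
  moreover have "straddle_small {0..T} \<tau> h3"
  proof -
    have "continuous_on {0..T} (\<lambda>v. q v $ i powr \<alpha>)" for i
      using q_component_continuous q_nonneg alpha_pos by (intro continuous_on_powr') auto
    then show ?thesis unfolding h3_def P_comp
      using \<tau> alpha_pos queue_rate_bound_nonneg
      by (intro straddle_small_sum straddle_small_continuous_factor) auto
  qed
  ultimately have "straddle_small {0..T} \<tau> (\<lambda>u v. (1 + \<alpha>) * M * h1 u v + (1 + \<alpha>) * h2 u v + h3 u v)"
    using alpha_pos M_nonneg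
    by (simp add: mult.assoc straddle_small_add straddle_small_scale)
  then show ?thesis
  proof (rule straddle_small_mono)
    fix u v assume "u \<in> {0..T}" "v \<in> {0..T}" "u \<le> \<tau>" "\<tau> \<le> v"
    then have uv: "0 \<le> u" "u \<le> v" "v \<le> T" by auto
    have "(\<Sum>i\<in>UNIV. P $ i * (q v $ i - q u $ i)) \<le> M * h1 u v + h2 u v"
      using weighted_queue_increment[OF P_nonneg uv] unfolding M_def h1_def h2_def .
    then have "(1 + \<alpha>) * (\<Sum>i\<in>UNIV. P $ i * (q v $ i - q u $ i)) \<le> (1 + \<alpha>) * (M * h1 u v + h2 u v)"
      using alpha_pos by (intro mult_left_mono) auto
    with lyapunov_increment[OF uv, of P] show "lyapunov v - lyapunov u \<le> (1 + \<alpha>) * M * h1 u v + (1 + \<alpha>) * h2 u v + h3 u v"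
      unfolding h3_def by (simp add: algebra_simps)
  qed
qed

lemma lyapunov_nonincreasing:
  assumes "t \<in> {0..T}"
  shows "lyapunov t \<le> lyapunov 0"
proof -
  obtain N1 where "negligible N1" and N1: "\<And>\<tau>. \<tau> \<in> {0..T} \<Longrightarrow> \<tau> \<notin> N1 \<Longrightarrow>
      \<forall>i. 0 < q \<tau> $ i \<longrightarrow> ((\<lambda>u. y u $ i) has_real_derivative 0) (at \<tau> within {0..T})"
    by (rule idling_exceptional_set) (rule that)
  obtain N2 where "negligible N2" and N2: "\<And>\<tau>. \<tau> \<in> {0..T} \<Longrightarrow> \<tau> \<notin> N2 \<Longrightarrow> \<forall>\<pi>\<in>S.
      \<pi> \<bullet> vpowr (q \<tau>) \<alpha> < Max ((\<lambda>\<rho>. \<rho> \<bullet> vpowr (q \<tau>) \<alpha>) ` S) \<longrightarrow>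
      (s \<pi> has_real_derivative 0) (at \<tau> within {0..T})"
    by (rule max_weight_exceptional_set) (rule that)
  show ?thesis
  proof (rule abs_cont_straddle_small_nonincreasing[where g = lyapunov and E = "N1 \<union> N2"])
    show "0 \<le> t" using assms by simp
    show "abs_cont_on {0..t} lyapunov"
      by (rule abs_cont_on_subset[OF lyapunov_abs_cont]) (use assms in auto)
    show "negligible (N1 \<union> N2)" using \<open>negligible N1\<close> \<open>negligible N2\<close> by simp
    fix \<tau> assume "\<tau> \<in> {0..t}" "\<tau> \<notin> N1 \<union> N2"
    then have "\<tau> \<in> {0..T}" using assms by auto
    then have "straddle_small {0..T} \<tau> (\<lambda>u v. lyapunov v - lyapunov u)"
      using N1[of \<tau>] N2[of \<tau>] \<open>\<tau> \<notin> N1 \<union> N2\<close> by (intro lyapunov_straddle_small) auto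
    then show "straddle_small {0..t} \<tau> (\<lambda>u v. lyapunov v - lyapunov u)"
      by (rule straddle_small_subset) (use assms in auto)
  qed
qed

theorem total_queue_bound:
  assumes "t \<in> {0..T}"
  shows "1 \<bullet> q t \<le> real CARD('n) powr (\<alpha> / (1 + \<alpha>)) * (1 \<bullet> q 0)"
proof -
  have "\<And>i. 0 \<le> q t $ i" "\<And>i. 0 \<le> q 0 $ i" using q_nonneg assms by auto
  moreover have "(\<Sum>i\<in>UNIV. q t $ i powr (1 + \<alpha>)) \<le> (\<Sum>i\<in>UNIV. q 0 $ i powr (1 + \<alpha>))"
    using lyapunov_nonincreasing[OF assms] unfolding lyapunov_def .
  ultimately show ?thesis by (rule inner_one_le_card_powr[OF alpha_pos])
qed

end

context fluid_model
begin

lemma weighted_queue_growth: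
  assumes "0 \<le> \<xi>" and bounded: "\<And>\<pi>. \<pi> \<in> S \<Longrightarrow> \<xi> \<bullet> \<pi> \<le> c" and t: "t \<in> {0..T}"
  shows "t * (\<xi> \<bullet> lam - c) \<le> \<xi> \<bullet> q t - \<xi> \<bullet> q 0"
proof -
  have "\<xi> \<bullet> q t - \<xi> \<bullet> q 0 = t * (\<xi> \<bullet> lam) - (\<Sum>\<pi>\<in>S. s \<pi> t * (\<xi> \<bullet> \<pi>)) + \<xi> \<bullet> y t"
    unfolding queue_equation[OF t] by (simp add: inner_add_right inner_diff_right inner_sum_right)
  moreover have "(\<Sum>\<pi>\<in>S. s \<pi> t * (\<xi> \<bullet> \<pi>)) \<le> (\<Sum>\<pi>\<in>S. s \<pi> t * c)"
    using allocation_nonneg[OF _ t] bounded by (intro sum_mono mult_left_mono) auto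
  moreover have "(\<Sum>\<pi>\<in>S. s \<pi> t * c) = t * c"
    using time_allocation[OF t] by (simp add: sum_distrib_right[symmetric])
  moreover have "0 \<le> \<xi> \<bullet> y t"
    using \<open>0 \<le> \<xi>\<close> q_y_nonneg[OF t] by (auto simp: inner_vec_def less_eq_vec_def intro!: sum_nonneg)
  ultimately show ?thesis by (simp add: algebra_simps)
qed

text \<open>The dual vectors in Xi S lam are weightings under which the queue content cannot
  decrease: schedules have weight at most 1 and the arrivals have weight exactly 1.\<close>
lemma Xi_weight_nondecreasing:
  assumes "\<xi> \<in> Xi S lam" "t \<in> {0..T}"
  shows "\<xi> \<bullet> q 0 \<le> \<xi> \<bullet> q t"
proof -
  have "\<xi> \<in> dual_region S" "\<xi> \<bullet> lam = 1"
    using assms(1) unfolding Xi_def S_star_def Ext_def by (auto simp: extreme_point_of_def)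
  then have "0 \<le> \<xi>" "\<xi> \<bullet> lam = 1" and "Max ((\<lambda>\<pi>. \<xi> \<bullet> \<pi>) ` S) \<le> 1"
    unfolding dual_region_def by auto
  then have "\<xi> \<bullet> \<pi> \<le> 1" if "\<pi> \<in> S" for \<pi>
    using finite_S that by (meson Max_ge finite_imageI image_eqI order_trans)
  from weighted_queue_growth[OF \<open>0 \<le> \<xi>\<close> this assms(2)] \<open>\<xi> \<bullet> lam = 1\<close> show ?thesis by simp
qed

text \<open>Under complete loading the vector 1 / max_\<pi> (1 \<bullet> \<pi>)
  is a convex combination of vectors in Xi S lam, each of which is a nondecreasing
  weighting by the previous lemma.\<close>
theorem total_queue_nondecreasing:
  assumes "complete_loading S lam" "t \<in> {0..T}"
  shows "1 \<bullet> q 0 \<le> 1 \<bullet> q t"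
proof -
  define m where "m = Max ((\<lambda>\<pi>. 1 \<bullet> \<pi>) ` S)"
  have one_nonneg: "0 \<le> (1::real^'n)" by (simp add: less_eq_vec_def)
  have m_ge: "1 \<bullet> \<pi> \<le> m" if "\<pi> \<in> S" for \<pi> unfolding m_def using finite_S that by simp
  show ?thesis
  proof (cases "m > 0")
    case True
    have "Xi S lam \<subseteq> {z. 0 \<le> (q t - q 0) \<bullet> z}"
    proof
      fix z assume "z \<in> Xi S lam"
      then have "z \<bullet> q 0 \<le> z \<bullet> q t" using assms(2) by (rule Xi_weight_nondecreasing)
      then show "z \<in> {z. 0 \<le> (q t - q 0) \<bullet> z}" by (simp add: inner_diff_left inner_commute[of _ z])
    qed
    then have "convex hull (Xi S lam) \<subseteq> {z. 0 \<le> (q t - q 0) \<bullet> z}"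
      by (rule hull_minimal) (rule convex_halfspace_ge)
    then have "0 \<le> (q t - q 0) \<bullet> ((1 / m) *\<^sub>R 1)"
      using assms(1) unfolding complete_loading_def m_def by blast
    then have "0 \<le> 1 \<bullet> (q t - q 0)" using True by (simp add: inner_commute zero_le_divide_iff)
    then show ?thesis by (simp add: inner_diff_right)
  next
    case False
    then have "\<And>\<pi>. \<pi> \<in> S \<Longrightarrow> 1 \<bullet> \<pi> \<le> 0" using m_ge by force
    from weighted_queue_growth[OF one_nonneg this assms(2)]
    have "t * (1 \<bullet> lam) \<le> 1 \<bullet> q t - 1 \<bullet> q 0" by simp
    moreover have "0 \<le> t * (1 \<bullet> lam)"
      using assms(2) lam_nonneg by (simp add: inner_vec_def sum_nonneg)
    ultimately show ?thesis by simp
  qed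
qed

end

theorem theorem8p2:
  fixes S :: "(real^'n) set" and lam :: "real^'n"
  assumes "finite S" and "S \<noteq> {}" and "\<forall>\<pi>\<in>S. 0 \<le> \<pi>"
    and "lam \<in> cap_region S"
  shows "(\<forall>\<alpha>>0. \<forall>T q y s. MW_fluid_solution \<alpha> S lam T q y s \<longrightarrow>
            (\<forall>t\<in>{0..T}. 1 \<bullet> q t \<le> real CARD('n) powr (\<alpha> / (1 + \<alpha>)) * (1 \<bullet> q 0)))
       \<and> (complete_loading S lam \<longrightarrow>
            (\<forall>T q y s. fluid_solution S lam T q y s \<longrightarrow>
               (\<forall>t\<in>{0..T}. 1 \<bullet> q t \<ge> 1 \<bullet> q 0)))"
proof (intro conjI allI impI ballI)
  fix \<alpha> T q y s t
  assume "\<alpha> > 0" and "MW_fluid_solution \<alpha> S lam T q y s" and "t \<in> {0..T}"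
  then interpret MW_fluid_model S lam T q y s \<alpha>
    using assms by unfold_locales (auto simp: MW_fluid_solution_def)
  show "1 \<bullet> q t \<le> real CARD('n) powr (\<alpha> / (1 + \<alpha>)) * (1 \<bullet> q 0)"
    using \<open>t \<in> {0..T}\<close> by (rule total_queue_bound)
next
  fix T q y s t
  assume "complete_loading S lam" and "fluid_solution S lam T q y s" and "t \<in> {0..T}"
  then interpret fluid_model S lam T q y s
    using assms by unfold_locales
  show "1 \<bullet> q 0 \<le> 1 \<bullet> q t"
    using \<open>complete_loading S lam\<close> \<open>t \<in> {0..T}\<close> by (rule total_queue_nondecreasing)
qed

end
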